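(* Assume the setting, utility assumptions and trading rule in the context, and assume moreover that all goods are essential for all agents, so $X_i=\mathbb{R}^{n+1}_{++}$ for every $i$. Start from initial holdings $x_i^0\in X_i$. (a) For any fixed premium levels $\delta_{ij}>0$, any sequence of bilateral trades (each executed according to the trading rule with these premiums) is finite: after finitely many trades no further bilateral trade is available. (b) Consider a process organized in stages $k=1,2,\dots$: in stage $k$ the premiums are $\delta^k_{ij}>0$, bilateral trades with these premiums are carried out (in any order) until no bilateral trade is available, after which the premiums are lowered to $\delta^{k+1}_{ij}\le\delta^k_{ij}$, with $\max_{i,j}\delta^k_{ij}\to0$ as $k\to\infty$. Then the sequences of holdings $x_i$ and price thresholds $p_{ij}(x_i)$ generated by this process converge, and their limits $\bar x_i$ form, together with prices $\bar p_j$, an equilibrium of prices and holdings (each $\bar x_i$ maximizes $u_i$ over $X_i$ subject to $x_{i0}+\sum_{j=1}^n\bar p_jx_{ij}=\bar x_{i0}+\sum_{j=1}^n\bar p_j\bar x_{ij}$), where moreover $p_{ij}(\bar x_i)=\bar p_j$ for every good $j\ne0$ and every agent $i$.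
   Context: There are goods $j=0,1,\dots,n$, good $0$ being money, and agents $i=1,\dots,m$; agent $i$ holds $x_i=(x_{i0},\dots,x_{in})$. Utility assumptions: $u_i$ is concave and twice continuously differentiable on $X_i$; $\nabla u_i(x_i)$ has all components positive; $\nabla^2u_i(x_i)$ is negative definite on the subspace orthogonal to $\nabla u_i(x_i)$; for every $x_i\in X_i$ the set $\{x_i'\in X_i:u_i(x_i')\ge u_i(x_i)\}$ is closed in $\mathbb{R}^{n+1}$. Price threshold: $p_{ij}(x_i)=\frac{\partial u_i}{\partial x_{ij}}(x_i)/\frac{\partial u_i}{\partial x_{i0}}(x_i)$ for $j\ne0$. Notation: $[\pi_j,-1]$ is the vector in $\mathbb{R}^{n+1}$ with component $0$ equal to $\pi_j$, component $j$ equal to $-1$, other components $0$. For $\pi_j>0$ define $\xi^+_j(x_i,\pi_j)=\operatorname{argmax}\{u_i(x_i+\xi[\pi_j,-1]):\xi\ge0,\ x_i+\xi[\pi_j,-1]\in X_i\}$ and $\xi^-_j(x_i,\pi_j)=\operatorname{argmax}\{u_i(x_i-\xi[\pi_j,-1]):\xi\ge0,\ x_i-\xi[\pi_j,-1]\in X_i\}$. Each agent $i$ has for each good $j\ne0$ a premium $\delta_{ij}>0$, and sets selling and buying prices $p^+_{ij}(x_i)=p_{ij}(x_i)+\delta_{ij}$, $p^-_{ij}(x_i)=p_{ij}(x_i)-\delta_{ij}$. Bilateral trade: a trade in good $j\ne0$ between seller $i_1$ and buyer $i_2$ at price $\pi_j$ is available if $x_{i_1j}>0$, $p^+_{i_1j}(x_{i_1})\le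 p^-_{i_2j}(x_{i_2})$ and $\pi_j\in[p^+_{i_1j}(x_{i_1}),p^-_{i_2j}(x_{i_2})]$; executing it transfers the amount $\xi_j=\min\{\xi^+_j(x_{i_1},\pi_j),\xi^-_j(x_{i_2},\pi_j)\}$ of good $j$ from $i_1$ to $i_2$ and the money amount $\pi_j\xi_j$ from $i_2$ to $i_1$, i.e. $x'_{i_1}=x_{i_1}+\xi_j[\pi_j,-1]$, $x'_{i_2}=x_{i_2}-\xi_j[\pi_j,-1]$, other agents' holdings unchanged. *)

theory Defs
  imports "HOL-Analysis.Analysis"
begin

text \<open>Goods are the elements of a finite type 'g (so there are CARD('g) = n+1 goods);
  the distinguished good g0 is money.
  Agents are the natural numbers 1..m; a state assigns a holding to each agent.\<close>

definition pos_orthant :: "(real ^ 'g::finite) set" where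
  "pos_orthant = {x. \<forall>j. 0 < x $ j}"

definition utility_assms ::
  "(real ^ 'g::finite) set \<Rightarrow> (real ^ 'g \<Rightarrow> real) \<Rightarrow> (real ^ 'g \<Rightarrow> real ^ 'g)
     \<Rightarrow> (real ^ 'g \<Rightarrow> real ^ 'g ^ 'g) \<Rightarrow> bool" where
  "utility_assms X u Du H \<longleftrightarrow>
     concave_on X u \<and>
     (\<forall>x\<in>X. (u has_derivative (\<lambda>h. Du x \<bullet> h)) (at x)) \<and>
     (\<forall>x\<in>X. (Du has_derivative (\<lambda>h. H x *v h)) (at x)) \<and>
     continuous_on X H \<and>
     (\<forall>x\<in>X. \<forall>j. 0 < Du x $ j) \<and>
     (\<forall>x\<in>X. \<forall>h. h \<noteq> 0 \<and> Du x \<bullet> h = 0 \<longrightarrow> h \<bullet> (H x *v h) < 0) \<and>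
     (\<forall>x\<in>X. closed {x'\<in>X. u x \<le> u x'})"

definition thr :: "'g \<Rightarrow> (real ^ 'g \<Rightarrow> real ^ 'g) \<Rightarrow> real ^ 'g \<Rightarrow> 'g \<Rightarrow> real" where
  "thr g0 Du x j = Du x $ j / Du x $ g0"

definition dirv :: "'g \<Rightarrow> 'g \<Rightarrow> real \<Rightarrow> real ^ 'g::finite" where
  "dirv g0 j \<pi> = (\<chi> k. if k = g0 then \<pi> else if k = j then -1 else 0)"

definition xi_plus ::
  "(real ^ 'g::finite) set \<Rightarrow> (real ^ 'g \<Rightarrow> real) \<Rightarrow> 'g \<Rightarrow> 'g \<Rightarrow> real ^ 'g \<Rightarrow> real \<Rightarrow> real" where
  "xi_plus X u g0 j x \<pi> =
     arg_max (\<lambda>\<xi>. u (x + \<xi> *\<^sub>R dirv g0 j \<pi>)) (\<lambda>\<xi>. 0 \<le> \<xi> \<and> x + \<xi> *\<^sub>R dirv g0 j \<pi> \<in> X)"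

definition xi_minus ::
  "(real ^ 'g::finite) set \<Rightarrow> (real ^ 'g \<Rightarrow> real) \<Rightarrow> 'g \<Rightarrow> 'g \<Rightarrow> real ^ 'g \<Rightarrow> real \<Rightarrow> real" where
  "xi_minus X u g0 j x \<pi> =
     arg_max (\<lambda>\<xi>. u (x - \<xi> *\<^sub>R dirv g0 j \<pi>)) (\<lambda>\<xi>. 0 \<le> \<xi> \<and> x - \<xi> *\<^sub>R dirv g0 j \<pi> \<in> X)"

text \<open>One bilateral trade with premiums delta (indexed by agent and good):
  seller i1, buyer i2, good j, price \<pi>.\<close>
definition trade_step ::
  "(real ^ 'g::finite) set \<Rightarrow> (nat \<Rightarrow> real ^ 'g \<Rightarrow> real) \<Rightarrow> (nat \<Rightarrow> real ^ 'g \<Rightarrow> real ^ 'g)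
     \<Rightarrow> 'g \<Rightarrow> nat \<Rightarrow> (nat \<Rightarrow> 'g \<Rightarrow> real)
     \<Rightarrow> (nat \<Rightarrow> real ^ 'g) \<Rightarrow> (nat \<Rightarrow> real ^ 'g) \<Rightarrow> bool" where
  "trade_step X u Du g0 m \<delta> s s' \<longleftrightarrow>
     (\<exists>i1 i2 j \<pi>. i1 \<in> {1..m} \<and> i2 \<in> {1..m} \<and> j \<noteq> g0 \<and>
        0 < s i1 $ j \<and>
        thr g0 (Du i1) (s i1) j + \<delta> i1 j \<le> thr g0 (Du i2) (s i2) j - \<delta> i2 j \<and>
        thr g0 (Du i1) (s i1) j + \<delta> i1 j \<le> \<pi> \<and> \<pi> \<le> thr g0 (Du i2) (s i2) j - \<delta> i2 j \<and>
        (let \<xi> = min (xi_plus X (u i1) g0 j (s i1) \<pi>) (xi_minus X (u i2) g0 j (s i2) \<pi>)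
         in s' = s(i1 := s i1 + \<xi> *\<^sub>R dirv g0 j \<pi>, i2 := s i2 - \<xi> *\<^sub>R dirv g0 j \<pi>)))"

definition trade_available ::
  "(real ^ 'g::finite) set \<Rightarrow> (nat \<Rightarrow> real ^ 'g \<Rightarrow> real) \<Rightarrow> (nat \<Rightarrow> real ^ 'g \<Rightarrow> real ^ 'g)
     \<Rightarrow> 'g \<Rightarrow> nat \<Rightarrow> (nat \<Rightarrow> 'g \<Rightarrow> real) \<Rightarrow> (nat \<Rightarrow> real ^ 'g) \<Rightarrow> bool" where
  "trade_available X u Du g0 m \<delta> s \<longleftrightarrow> (\<exists>s'. trade_step X u Du g0 m \<delta> s s')"

definition equilibrium ::
  "(real ^ 'g::finite) set \<Rightarrow> (nat \<Rightarrow> real ^ 'g \<Rightarrow> real) \<Rightarrow> 'g \<Rightarrow> nat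
     \<Rightarrow> (nat \<Rightarrow> real ^ 'g) \<Rightarrow> (nat \<Rightarrow> real ^ 'g) \<Rightarrow> ('g \<Rightarrow> real) \<Rightarrow> bool" where
  "equilibrium X u g0 m x0 xbar pbar \<longleftrightarrow>
     (\<forall>i\<in>{1..m}. xbar i \<in> X \<and>
        (\<forall>x\<in>X. x $ g0 + (\<Sum>j\<in>UNIV - {g0}. pbar j * x $ j)
                 = xbar i $ g0 + (\<Sum>j\<in>UNIV - {g0}. pbar j * xbar i $ j)
               \<longrightarrow> u i x \<le> u i (xbar i))) \<and>
     (\<Sum>i=1..m. xbar i) = (\<Sum>i=1..m. x0 i)"

end

theory Submission
  imports Defs
begin

text \<open>A trade moves the two traders along rays from their holdings and stops at the first of
  their two ray maximizers; it never lowers a utility and preserves total holdings, so all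
  holdings stay in compact attainable sets. There the marginal utility of money is bounded below
  and the Hessian is bounded, so the trader who reaches its ray maximizer, having started with a
  marginal gain proportional to its premium, gains a fixed amount of utility: with fixed premiums
  only finitely many trades are possible.

  In the staged process every stage therefore ends, utilities increase to limits, and at a stage
  end the price thresholds of any two agents differ by at most their premiums. A limit point
  along the stage ends thus has common thresholds p. By the tangent inequality of concave
  functions it is an equilibrium at prices p, and the negative definiteness of the Hessian on the
  tangent spaces makes it the only allocation with the limit utilities and the initial total, so
  the whole process converges to it.\<close>

section \<open>Concavity, compactness and subsequences\<close>

lemma convex_add_scaleR_diff_mem:
  assumes "convex S" "x \<in> S" "y \<in> S" "0 \<le> t" "t \<le> 1"
  shows "x + t *\<^sub>R (y - x) \<in> S"
proof -
  have "x + t *\<^sub>R (y - x) = (1 - t) *\<^sub>R x + t *\<^sub>R y" by (simp add: algebra_simps)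
  then show ?thesis using convexD_alt[OF assms] by simp
qed

lemma concave_on_add_scaleR_diff:
  assumes "concave_on S f" "x \<in> S" "y \<in> S" "0 \<le> t" "t \<le> 1"
  shows "(1 - t) * f x + t * f y \<le> f (x + t *\<^sub>R (y - x))"
proof -
  have "x + t *\<^sub>R (y - x) = (1 - t) *\<^sub>R x + t *\<^sub>R y" by (simp add: algebra_simps)
  then show ?thesis using concave_onD[OF assms(1,4,5,2,3)] by simp
qed

lemma concave_on_imp_below_tangent:
  fixes f :: "'a::real_normed_vector \<Rightarrow> real"
  assumes cc: "concave_on S f" and "open S" and x: "x \<in> S" and y: "y \<in> S"
    and d: "(f has_derivative f') (at x)"
  shows "f y \<le> f x + f' (y - x)"
proof -
  let ?l = "\<lambda>t::real. x + t *\<^sub>R (y - x)"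
  define A where "A = ?l -` S"
  have convex_S: "convex S" using cc by (simp add: concave_on_iff)
  have line_comb: "p *\<^sub>R ?l a + q *\<^sub>R ?l b = ?l (p * a + q * b)" if "p + q = 1" for p q a b
    using that by (simp add: algebra_simps) (metis add_diff_cancel_left' scaleR_add_left scaleR_one)
  have convex_A: "convex A"
  proof (rule convexI)
    fix a b p q :: real
    assume "a \<in> A" "b \<in> A" "0 \<le> p" "0 \<le> q" "p + q = 1"
    then show "p *\<^sub>R a + q *\<^sub>R b \<in> A"
      using convexD[OF convex_S, of "?l a" "?l b" p q] line_comb[of p q a b] by (simp add: A_def)
  qed
  have "open A" unfolding A_def
    by (rule continuous_open_vimage[OF \<open>open S\<close>]) (auto intro: continuous_intros)
  have 01: "0 \<in> A" "1 \<in> A" using x y by (auto simp: A_def)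
  have "convex_on A (\<lambda>t. - f (?l t))"
    unfolding convex_on_def
  proof (intro conjI convex_A ballI allI impI)
    fix a b p q :: real
    assume ab: "a \<in> A" "b \<in> A" "0 \<le> p" "0 \<le> q" "p + q = 1"
    then have "p = 1 - q" by simp
    show "- f (?l (p *\<^sub>R a + q *\<^sub>R b)) \<le> p * - f (?l a) + q * - f (?l b)"
      using concave_onD[OF cc, of q "?l a" "?l b"] line_comb[OF ab(5)] ab
      unfolding \<open>p = 1 - q\<close> by (simp add: A_def)
  qed
  moreover have "((\<lambda>t. - f (?l t)) has_field_derivative - f' (y - x)) (at 0 within A)"
  proof -
    have "(?l has_derivative (\<lambda>t. t *\<^sub>R (y - x))) (at 0)"
      by (auto intro!: derivative_eq_intros)
    from has_derivative_compose[OF this, of f f'] d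
    have "((\<lambda>t. f (?l t)) has_derivative (\<lambda>t. t * f' (y - x))) (at 0)"
      using linear_cmul[OF has_derivative_linear[OF d]] by (simp add: o_def)
    then have "((\<lambda>t. f (?l t)) has_field_derivative f' (y - x)) (at 0)"
      by (rule has_derivative_imp_has_field_derivative) simp
    from DERIV_minus[OF this] show ?thesis by (rule has_field_derivative_at_within)
  qed
  ultimately have "- f' (y - x) * (1 - 0) \<le> - f (?l 1) - - f (?l 0)"
    by (intro convex_on_imp_above_tangent convex_connected convex_A)
      (simp_all add: interior_open[OF \<open>open A\<close>] 01 convex_A)
  then show ?thesis by simp
qed

lemma abs_quadratic_form_le:
  fixes A :: "real^'n::finite^'n"
  assumes "(\<Sum>i\<in>UNIV. \<Sum>j\<in>UNIV. \<bar>A $ i $ j\<bar>) \<le> M"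
  shows "\<bar>(A *v e) \<bullet> e\<bar> \<le> M * norm e ^ 2"
proof -
  have "\<bar>(A *v e) \<bullet> e\<bar> \<le> norm (A *v e) * norm e" by (rule Cauchy_Schwarz_ineq2)
  also have "norm (A *v e) \<le> onorm ((*v) A) * norm e"
    by (rule onorm[OF matrix_vector_mul_bounded_linear])
  also have "onorm ((*v) A) \<le> M" using onorm_le_matrix_component_sum[of A] assms by linarith
  finally show ?thesis by (simp add: power2_eq_square mult_right_mono mult.assoc)
qed

lemma compact_family_bounded_above:
  fixes f :: "'i \<Rightarrow> 'a::topological_space \<Rightarrow> real"
  assumes "finite I" "\<And>i. i \<in> I \<Longrightarrow> compact (K i)" "\<And>i. i \<in> I \<Longrightarrow> continuous_on (K i) (f i)"
  shows "\<exists>B. \<forall>i\<in>I. \<forall>z\<in>K i. f i z \<le> B"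
proof -
  have "compact (\<Union>i\<in>I. f i ` K i)"
    using assms by (intro compact_UN compact_continuous_image) auto
  then obtain B where "\<forall>v\<in>(\<Union>i\<in>I. f i ` K i). norm v \<le> B"
    using compact_imp_bounded bounded_iff by metis
  then show ?thesis by (intro exI[of _ B]) (auto dest: abs_le_D1)
qed

lemma compact_family_pos_bounded_below:
  fixes f :: "'i \<Rightarrow> 'a::topological_space \<Rightarrow> real"
  assumes "finite I" "\<And>i. i \<in> I \<Longrightarrow> compact (K i)" "\<And>i. i \<in> I \<Longrightarrow> continuous_on (K i) (f i)"
    and pos: "\<And>i z. i \<in> I \<Longrightarrow> z \<in> K i \<Longrightarrow> 0 < f i z"
  shows "\<exists>c>0. \<forall>i\<in>I. \<forall>z\<in>K i. c \<le> f i z"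
proof (cases "(\<Union>i\<in>I. f i ` K i) = {}")
  case True
  then show ?thesis by (intro exI[of _ 1]) auto
next
  case False
  have "compact (\<Union>i\<in>I. f i ` K i)"
    using assms by (intro compact_UN compact_continuous_image) auto
  from compact_attains_inf[OF this False]
  obtain c where c: "c \<in> (\<Union>i\<in>I. f i ` K i)" "\<forall>v\<in>(\<Union>i\<in>I. f i ` K i). c \<le> v"
    by blast
  from c(1) obtain i z where "i \<in> I" "z \<in> K i" "c = f i z" by blast
  then have "0 < c" using pos by simp
  moreover have "\<forall>i\<in>I. \<forall>z\<in>K i. c \<le> f i z" using c(2) by blast
  ultimately show ?thesis by blast
qed

lemma finite_pos_lower_bound:
  fixes f :: "'a \<Rightarrow> real"
  assumes "finite A" "\<And>x. x \<in> A \<Longrightarrow> 0 < f x"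
  shows "\<exists>c>0. \<forall>x\<in>A. c \<le> f x"
proof (intro exI conjI ballI)
  show "0 < Min (insert 1 (f ` A))" using assms by (simp add: Min_gr_iff)
  show "Min (insert 1 (f ` A)) \<le> f x" if "x \<in> A" for x using assms(1) that by simp
qed

lemma finite_family_convergent_subseq:
  fixes f :: "nat \<Rightarrow> 'i \<Rightarrow> 'a::metric_space"
  assumes "finite I" "\<And>i. i \<in> I \<Longrightarrow> compact (K i)" "\<And>i n. i \<in> I \<Longrightarrow> f n i \<in> K i"
  shows "\<exists>r l. strict_mono r \<and> (\<forall>i\<in>I. l i \<in> K i \<and> (\<lambda>n. f (r n) i) \<longlonglongrightarrow> l i)"
  using assms
proof (induction I rule: finite_induct)
  case empty
  show ?case by (intro exI[of _ id]) (auto simp: strict_mono_def)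
next
  case (insert a I)
  then obtain r l where r: "strict_mono r" "\<forall>i\<in>I. l i \<in> K i \<and> (\<lambda>n. f (r n) i) \<longlonglongrightarrow> l i"
    by auto
  have "seq_compact (K a)" "\<And>n. f (r n) a \<in> K a"
    using insert.prems by (auto intro: compact_imp_seq_compact)
  then obtain la r' where r': "la \<in> K a" "strict_mono r'" "((\<lambda>n. f (r n) a) \<circ> r') \<longlonglongrightarrow> la"
    using seq_compactE by metis
  have "\<forall>i\<in>insert a I. (l(a := la)) i \<in> K i \<and> (\<lambda>n. f ((r \<circ> r') n) i) \<longlonglongrightarrow> (l(a := la)) i"
    using r r' LIMSEQ_subseq_LIMSEQ[OF _ r'(2)] by (auto simp: o_def)
  then show ?case using strict_mono_o[OF r(1) r'(2)] by blast
qed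

lemma finite_family_tendsto_unique_limit_point:
  fixes f :: "nat \<Rightarrow> 'i \<Rightarrow> 'a::metric_space"
  assumes "finite I" "\<And>i. i \<in> I \<Longrightarrow> compact (K i)" "\<And>i n. i \<in> I \<Longrightarrow> f n i \<in> K i"
    and unique: "\<And>r w. strict_mono r \<Longrightarrow> \<forall>i\<in>I. (\<lambda>n. f (r n) i) \<longlonglongrightarrow> w i \<Longrightarrow> \<forall>i\<in>I. w i = z i"
    and i: "i \<in> I"
  shows "(\<lambda>n. f n i) \<longlonglongrightarrow> z i"
proof (rule ccontr)
  assume "\<not> (\<lambda>n. f n i) \<longlonglongrightarrow> z i"
  then obtain \<epsilon> where "\<epsilon> > 0" and often: "\<forall>N. \<exists>n\<ge>N. \<epsilon> \<le> dist (f n i) (z i)"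
    unfolding lim_sequentially by (auto simp: not_less)
  define S where "S = {n. \<epsilon> \<le> dist (f n i) (z i)}"
  have "infinite S" unfolding S_def infinite_nat_iff_unbounded_le using often by auto
  define q where "q = enumerate S"
  have q: "strict_mono q" "\<And>n. \<epsilon> \<le> dist (f (q n) i) (z i)"
    using strict_mono_enumerate[OF \<open>infinite S\<close>] enumerate_in_set[OF \<open>infinite S\<close>]
    by (auto simp: q_def S_def)
  obtain r w where r: "strict_mono r" "\<forall>i\<in>I. w i \<in> K i \<and> (\<lambda>n. f (q (r n)) i) \<longlonglongrightarrow> w i"
    using finite_family_convergent_subseq[of I K "\<lambda>n. f (q n)"] assms by auto
  have "(\<lambda>n. f (q (r n)) i) \<longlonglongrightarrow> z i"
    using unique[of "q \<circ> r" w] strict_mono_o[OF q(1) r(1)] r(2) i by auto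
  then obtain N where "\<forall>n\<ge>N. dist (f (q (r n)) i) (z i) < \<epsilon>"
    using \<open>\<epsilon> > 0\<close> unfolding lim_sequentially by blast
  then show False using q(2)[of "r N"] by auto
qed

section \<open>The positive orthant, budgets and trade directions\<close>

lemma open_pos_orthant: "open (pos_orthant :: (real^'g::finite) set)"
proof -
  have "pos_orthant = (\<Inter>j. {x::real^'g. 0 < x $ j})" by (auto simp: pos_orthant_def)
  moreover have "open (\<Inter>j. {x::real^'g. 0 < x $ j})"
    by (intro open_INT) (auto intro: open_halfspace_component_gt_cart)
  ultimately show ?thesis by simp
qed

lemma convex_pos_orthant: "convex (pos_orthant :: (real^'g::finite) set)"
proof (rule convexI)
  fix x y :: "real^'g" and a b :: real
  assume x: "x \<in> pos_orthant" and y: "y \<in> pos_orthant" and ab: "0 \<le> a" "0 \<le> b" "a + b = 1"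
  have "0 < a * x $ j + b * y $ j" for j
  proof -
    have "0 < x $ j" "0 < y $ j" using x y by (simp_all add: pos_orthant_def)
    moreover have "0 < a \<or> 0 < b" using ab by linarith
    ultimately show ?thesis
      using ab(1,2) mult_pos_pos mult_nonneg_nonneg less_imp_le add_pos_nonneg add_nonneg_pos by metis
  qed
  then show "a *\<^sub>R x + b *\<^sub>R y \<in> pos_orthant" by (simp add: pos_orthant_def)
qed

definition budget :: "'g \<Rightarrow> ('g \<Rightarrow> real) \<Rightarrow> real^'g::finite \<Rightarrow> real" where
  "budget g0 p x = x $ g0 + (\<Sum>j\<in>UNIV - {g0}. p j * x $ j)"

lemma budget_add: "budget g0 p (x + y) = budget g0 p x + budget g0 p y"
  by (simp add: budget_def distrib_left sum.distrib)

lemma budget_diff: "budget g0 p (x - y) = budget g0 p x - budget g0 p y"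
  using budget_add[of g0 p "x - y" y] by simp

lemma budget_sum: "finite A \<Longrightarrow> budget g0 p (\<Sum>i\<in>A. f i) = (\<Sum>i\<in>A. budget g0 p (f i))"
  by (induction A rule: finite_induct) (auto simp: budget_add, simp add: budget_def)

lemma inner_eq_budget:
  fixes v h :: "real^'g::finite"
  assumes "v $ g0 \<noteq> 0" "\<And>j. j \<noteq> g0 \<Longrightarrow> v $ j / v $ g0 = p j"
  shows "v \<bullet> h = v $ g0 * budget g0 p h"
proof -
  have "v \<bullet> h = v $ g0 * h $ g0 + (\<Sum>k\<in>UNIV - {g0}. v $ k * h $ k)"
    by (simp add: inner_vec_def sum.remove[of UNIV g0])
  also have "(\<Sum>k\<in>UNIV - {g0}. v $ k * h $ k) = (\<Sum>k\<in>UNIV - {g0}. v $ g0 * (p k * h $ k))"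
    using assms by (intro sum.cong refl) (auto simp: field_simps)
  finally show ?thesis by (simp add: budget_def distrib_left sum_distrib_left)
qed

lemma xi_minus_eq_arg_max:
  "xi_minus X u g0 j x \<pi> =
     arg_max (\<lambda>\<xi>. u (x + \<xi> *\<^sub>R (- dirv g0 j \<pi>))) (\<lambda>\<xi>. 0 \<le> \<xi> \<and> x + \<xi> *\<^sub>R (- dirv g0 j \<pi>) \<in> X)"
  by (simp add: xi_minus_def)

lemma dirv_nth:
  assumes "j \<noteq> g0"
  shows "dirv g0 j \<pi> $ g0 = \<pi>" "dirv g0 j \<pi> $ j = -1"
  using assms by (auto simp: dirv_def)

lemma inner_dirv:
  fixes v :: "real^'g::finite"
  assumes "j \<noteq> g0"
  shows "v \<bullet> dirv g0 j \<pi> = v $ g0 * \<pi> - v $ j"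
proof -
  have "v \<bullet> dirv g0 j \<pi> = (\<Sum>k\<in>UNIV. (if k = g0 then v $ g0 * \<pi> else 0) + (if k = j then - v $ j else 0))"
    unfolding inner_vec_def dirv_def using assms by (intro sum.cong) auto
  then show ?thesis by (simp add: sum.distrib)
qed

lemma norm_dirv_squared: "j \<noteq> g0 \<Longrightarrow> norm (dirv g0 j \<pi> :: real^'g::finite) ^ 2 = \<pi> ^ 2 + 1"
  unfolding power2_norm_eq_inner by (simp add: inner_dirv dirv_nth power2_eq_square)

lemma inner_dirv_thr:
  assumes "j \<noteq> g0" "Du x $ g0 \<noteq> 0"
  shows "Du x \<bullet> dirv g0 j \<pi> = Du x $ g0 * (\<pi> - thr g0 Du x j)"
  using assms by (simp add: inner_dirv thr_def field_simps)

text \<open>xi_plus and xi_minus are ray maximizers for the directions dirv g0 j \<pi> and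
  - dirv g0 j \<pi> as soon as such a maximizer exists.\<close>
definition ray_maximizer :: "(real^'g::finite \<Rightarrow> real) \<Rightarrow> real^'g \<Rightarrow> real^'g \<Rightarrow> real \<Rightarrow> bool" where
  "ray_maximizer u x e = is_arg_max (\<lambda>t. u (x + t *\<^sub>R e)) (\<lambda>t. 0 \<le> t \<and> x + t *\<^sub>R e \<in> pos_orthant)"

lemma ray_maximizerD:
  assumes "ray_maximizer u x e ts"
  shows "0 \<le> ts" "x + ts *\<^sub>R e \<in> pos_orthant"
    "\<And>t. 0 \<le> t \<Longrightarrow> x + t *\<^sub>R e \<in> pos_orthant \<Longrightarrow> u (x + t *\<^sub>R e) \<le> u (x + ts *\<^sub>R e)"
  using assms unfolding ray_maximizer_def is_arg_max_linorder by auto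

section \<open>Utility functions\<close>

locale utility =
  fixes u :: "real^'g::finite \<Rightarrow> real" and Du :: "real^'g \<Rightarrow> real^'g" and H :: "real^'g \<Rightarrow> real^'g^'g"
  assumes utility_assms: "utility_assms pos_orthant u Du H"
begin

lemma concave: "concave_on pos_orthant u"
  and has_derivative_u: "x \<in> pos_orthant \<Longrightarrow> (u has_derivative (\<lambda>h. Du x \<bullet> h)) (at x)"
  and has_derivative_Du: "x \<in> pos_orthant \<Longrightarrow> (Du has_derivative (\<lambda>h. H x *v h)) (at x)"
  and continuous_on_H: "continuous_on pos_orthant H"
  and Du_pos: "x \<in> pos_orthant \<Longrightarrow> 0 < Du x $ j"
  and hessian_neg: "x \<in> pos_orthant \<Longrightarrow> h \<noteq> 0 \<Longrightarrow> Du x \<bullet> h = 0 \<Longrightarrow> h \<bullet> (H x *v h) < 0"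
  and closed_upper_level: "x \<in> pos_orthant \<Longrightarrow> closed {x' \<in> pos_orthant. u x \<le> u x'}"
  using utility_assms unfolding utility_assms_def by blast+

lemma isCont_u: "x \<in> pos_orthant \<Longrightarrow> isCont u x"
  and isCont_Du: "x \<in> pos_orthant \<Longrightarrow> isCont Du x"
  by (metis has_derivative_continuous has_derivative_u has_derivative_Du)+

lemma continuous_on_u: "continuous_on pos_orthant u"
  and continuous_on_Du: "continuous_on pos_orthant Du"
  by (simp_all add: continuous_at_imp_continuous_on isCont_u isCont_Du)

lemma le_tangent: "x \<in> pos_orthant \<Longrightarrow> y \<in> pos_orthant \<Longrightarrow> u y \<le> u x + Du x \<bullet> (y - x)"
  using concave_on_imp_below_tangent[OF concave open_pos_orthant _ _ has_derivative_u] by blast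

lemma thr_pos: "x \<in> pos_orthant \<Longrightarrow> 0 < thr g0 Du x j"
  by (simp add: thr_def Du_pos)

lemma tendsto_thr:
  assumes "z \<in> pos_orthant" "(f \<longlongrightarrow> z) F"
  shows "((\<lambda>n. thr g0 Du (f n) j) \<longlongrightarrow> thr g0 Du z j) F"
  unfolding thr_def using assms Du_pos[of z g0]
  by (intro tendsto_divide tendsto_vec_nth isCont_tendsto_compose[OF isCont_Du]) auto

lemma continuous_on_thr:
  assumes "S \<subseteq> pos_orthant"
  shows "continuous_on S (\<lambda>z. thr g0 Du z j)"
proof -
  have "continuous_on S Du" using continuous_on_Du assms by (rule continuous_on_subset)
  moreover have "Du z $ g0 \<noteq> 0" if "z \<in> S" for z using Du_pos[of z g0] that assms by fastforce
  ultimately show ?thesis unfolding thr_def by (intro continuous_intros) auto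
qed

lemma le_budget:
  assumes "z \<in> pos_orthant" "x \<in> pos_orthant" "\<And>j. j \<noteq> g0 \<Longrightarrow> thr g0 Du z j = p j"
  shows "u x \<le> u z + Du z $ g0 * (budget g0 p x - budget g0 p z)"
proof -
  have "Du z \<bullet> (x - z) = Du z $ g0 * budget g0 p (x - z)"
    using assms Du_pos[of z g0] by (intro inner_eq_budget) (auto simp: thr_def)
  then show ?thesis using le_tangent[OF assms(1,2)] by (simp add: budget_diff)
qed

lemma segment_upper_level:
  assumes "z \<in> pos_orthant" "w \<in> pos_orthant" "u z \<le> u w" "0 \<le> l" "l \<le> 1"
  shows "z + l *\<^sub>R (w - z) \<in> pos_orthant" "u z \<le> u (z + l *\<^sub>R (w - z))"
proof -
  show "z + l *\<^sub>R (w - z) \<in> pos_orthant"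
    using convex_add_scaleR_diff_mem[OF convex_pos_orthant assms(1,2,4,5)] .
  have "l * u z \<le> l * u w" using assms by (intro mult_left_mono) auto
  then show "u z \<le> u (z + l *\<^sub>R (w - z))"
    using concave_on_add_scaleR_diff[OF concave assms(1,2,4,5)] by (simp add: algebra_simps)
qed

lemma has_real_derivative_along_ray:
  assumes "x + t *\<^sub>R e \<in> pos_orthant"
  shows "((\<lambda>s. u (x + s *\<^sub>R e)) has_real_derivative Du (x + t *\<^sub>R e) \<bullet> e) (at t)"
proof -
  have "((\<lambda>s. x + s *\<^sub>R e) has_derivative (\<lambda>s. s *\<^sub>R e)) (at t)"
    by (auto intro!: derivative_eq_intros)
  from has_derivative_compose[OF this has_derivative_u[OF assms]]
  show ?thesis by (rule has_derivative_imp_has_field_derivative) (simp add: o_def)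
qed

lemma has_real_derivative_directional_derivative:
  assumes "x + t *\<^sub>R e \<in> pos_orthant"
  shows "((\<lambda>s. Du (x + s *\<^sub>R e) \<bullet> e) has_real_derivative (H (x + t *\<^sub>R e) *v e) \<bullet> e) (at t)"
proof -
  have "((\<lambda>s. x + s *\<^sub>R e) has_derivative (\<lambda>s. s *\<^sub>R e)) (at t)"
    by (auto intro!: derivative_eq_intros)
  from has_derivative_compose[OF this has_derivative_Du[OF assms]]
  have "((\<lambda>s. Du (x + s *\<^sub>R e)) has_derivative (\<lambda>s. H (x + t *\<^sub>R e) *v (s *\<^sub>R e))) (at t)"
    by (simp add: o_def)
  from bounded_linear.has_derivative[OF bounded_linear_inner_left this, of e]
  show ?thesis by (rule has_derivative_imp_has_field_derivative) (simp add: matrix_vector_mult_scaleR)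
qed

text \<open>The non-degeneracy of the Hessian makes u strictly concave along the level set.\<close>
lemma level_midpoint_gt:
  assumes z: "z \<in> pos_orthant" and w: "w \<in> pos_orthant" and "w \<noteq> z" and uw: "u w = u z"
  shows "u z < u (z + (1/2) *\<^sub>R (w - z))"
proof (rule ccontr)
  define h where "h = w - z"
  define v where "v = z + (1/2) *\<^sub>R h"
  have seg: "v + s *\<^sub>R h \<in> pos_orthant \<and> u z \<le> u (v + s *\<^sub>R h)" if "-1/2 \<le> s" "s \<le> 1/2" for s
  proof -
    have "v + s *\<^sub>R h = z + (1/2 + s) *\<^sub>R (w - z)" by (simp add: v_def h_def algebra_simps)
    then show ?thesis using segment_upper_level[OF z w, of "1/2 + s"] uw that by auto
  qed
  then have v: "v \<in> pos_orthant" using seg[of 0] by simp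
  assume "\<not> u z < u (z + (1/2) *\<^sub>R (w - z))"
  then have uv: "u v = u z" using seg[of 0] by (simp add: v_def h_def)
  \<comment> \<open>v maximizes u on the segment, so the derivative along h vanishes there\<close>
  have "u z \<le> u v - (1/2) * (Du v \<bullet> h)" "u w \<le> u v + (1/2) * (Du v \<bullet> h)"
    using le_tangent[OF v z] le_tangent[OF v w]
    by (simp_all add: v_def h_def inner_diff_right algebra_simps)
  then have Dh: "Du v \<bullet> h = 0" using uv uw by linarith
  have "h \<noteq> 0" using \<open>w \<noteq> z\<close> by (simp add: h_def)
  then have neg: "(H v *v h) \<bullet> h < 0" using hessian_neg[OF v _ Dh] by (simp add: inner_commute)
  define \<phi> where "\<phi> s = Du (v + s *\<^sub>R h) \<bullet> h" for s
  have "(\<phi> has_real_derivative (H v *v h) \<bullet> h) (at 0)"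
    using has_real_derivative_directional_derivative[of v 0 h] v unfolding \<phi>_def by simp
  from DERIV_neg_dec_right[OF this neg]
  obtain d where "d > 0" "\<forall>s>0. s < d \<longrightarrow> \<phi> (0 + s) < \<phi> 0" by blast
  moreover have "\<phi> 0 = 0" using Dh by (simp add: \<phi>_def)
  ultimately have d: "d > 0" "\<And>s. 0 < s \<Longrightarrow> s < d \<Longrightarrow> \<phi> s < 0" by auto
  define t where "t = min d (1/2) / 2"
  have t: "0 < t" "t < d" "t \<le> 1/2" using d by (auto simp: t_def)
  have "((\<lambda>s. u (v + s *\<^sub>R h)) has_derivative (*) (\<phi> s)) (at s within {0..t})"
    if "0 \<le> s" "s \<le> t" for s
    using has_real_derivative_along_ray[of v s h] seg[of s] that t
    unfolding has_field_derivative_def \<phi>_def by (auto intro: has_derivative_at_withinI)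
  from mvt_simple[OF t(1) this]
  obtain \<zeta> where \<zeta>: "\<zeta> \<in> {0<..<t}" "u (v + t *\<^sub>R h) - u v = \<phi> \<zeta> * t" by auto
  have "\<phi> \<zeta> * t < 0" using d(2)[of \<zeta>] \<zeta>(1) t by (intro mult_neg_pos) auto
  then have "u (v + t *\<^sub>R h) < u v" using \<zeta>(2) by linarith
  then show False using seg[of t] t uv by auto
qed

lemma ray_maximizer_exists:
  assumes x: "x \<in> pos_orthant" and k: "e $ k < 0"
  shows "ray_maximizer u x e (arg_max (\<lambda>t. u (x + t *\<^sub>R e)) (\<lambda>t. 0 \<le> t \<and> x + t *\<^sub>R e \<in> pos_orthant))"
proof -
  let ?r = "\<lambda>t. x + t *\<^sub>R e"
  \<comment> \<open>it suffices to maximize over the compact set of points at least as good as x\<close>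
  define F where "F = {t. 0 \<le> t \<and> ?r t \<in> {x' \<in> pos_orthant. u x \<le> u x'}}"
  have "closed (?r -` {x' \<in> pos_orthant. u x \<le> u x'})"
    by (rule continuous_closed_vimage[OF closed_upper_level[OF x]]) (intro continuous_intros)
  moreover have "F = {0..} \<inter> ?r -` {x' \<in> pos_orthant. u x \<le> u x'}" by (auto simp: F_def)
  ultimately have "closed F" by (simp add: closed_Int)
  moreover have "bounded F"
  proof -
    have "\<bar>t\<bar> \<le> x $ k / - e $ k" if "t \<in> F" for t
    proof -
      have "0 \<le> t" "0 < x $ k + t * e $ k" using that by (auto simp: F_def pos_orthant_def)
      then show ?thesis using k by (simp add: field_simps)
    qed
    then show ?thesis unfolding bounded_iff real_norm_def by blast
  qed
  moreover have "0 \<in> F" using x by (simp add: F_def)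
  moreover have "continuous_on F (\<lambda>t. u (?r t))"
    by (rule continuous_on_compose2[OF continuous_on_u]) (auto simp: F_def intro!: continuous_intros)
  ultimately obtain ts where ts: "ts \<in> F" "\<forall>t\<in>F. u (?r t) \<le> u (?r ts)"
    using continuous_attains_sup[of F] compact_eq_bounded_closed by blast
  have "ray_maximizer u x e ts"
    unfolding ray_maximizer_def is_arg_max_linorder
  proof (intro conjI allI impI)
    show "0 \<le> ts" "?r ts \<in> pos_orthant" using ts by (auto simp: F_def)
    fix t assume t: "0 \<le> t \<and> ?r t \<in> pos_orthant"
    show "u (?r t) \<le> u (?r ts)"
    proof (cases "t \<in> F")
      case False
      then have "u (?r t) < u x" using t by (auto simp: F_def)
      also have "u x \<le> u (?r ts)" using ts by (auto simp: F_def)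
      finally show ?thesis by simp
    qed (use ts in auto)
  qed
  then show ?thesis
    unfolding ray_maximizer_def arg_max_def by (rule someI)
qed

lemma ray_maximizer_mono:
  assumes x: "x \<in> pos_orthant" and ts: "ray_maximizer u x e ts" and t: "0 \<le> t" "t \<le> ts"
  shows "x + t *\<^sub>R e \<in> pos_orthant" "u x \<le> u (x + t *\<^sub>R e)"
proof -
  note max = ray_maximizerD[OF ts]
  have "u x \<le> u (x + ts *\<^sub>R e)" using max(3)[of 0] x by simp
  then have "x + t *\<^sub>R e \<in> pos_orthant \<and> u x \<le> u (x + t *\<^sub>R e)" if "ts \<noteq> 0"
    using segment_upper_level[OF x max(2), of "t / ts"] that t max(1) by auto
  then show "x + t *\<^sub>R e \<in> pos_orthant" "u x \<le> u (x + t *\<^sub>R e)"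
    using t x by (cases "ts = 0"; auto)+
qed

lemma directional_derivative_lower_bound:
  assumes "convex K" "K \<subseteq> pos_orthant" and x: "x \<in> K" and xe: "x + ts *\<^sub>R e \<in> K"
    and t: "0 \<le> t" "t \<le> ts"
    and M: "\<And>z. z \<in> K \<Longrightarrow> (\<Sum>i\<in>UNIV. \<Sum>j\<in>UNIV. \<bar>H z $ i $ j\<bar>) \<le> M"
  shows "Du x \<bullet> e - M * norm e ^ 2 * t \<le> Du (x + t *\<^sub>R e) \<bullet> e"
proof (cases "t = 0")
  case False
  then have "0 < t" "0 < ts" using t by simp_all
  have inK: "x + s *\<^sub>R e \<in> K" if "0 \<le> s" "s \<le> t" for s
    using convex_add_scaleR_diff_mem[OF \<open>convex K\<close> x xe, of "s / ts"] that t \<open>0 < ts\<close> by auto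
  define \<phi> where "\<phi> s = Du (x + s *\<^sub>R e) \<bullet> e" for s
  have "(\<phi> has_derivative (*) ((H (x + s *\<^sub>R e) *v e) \<bullet> e)) (at s within {0..t})"
    if "0 \<le> s" "s \<le> t" for s
  proof -
    have "x + s *\<^sub>R e \<in> pos_orthant" using inK[OF that] \<open>K \<subseteq> pos_orthant\<close> by blast
    from has_real_derivative_directional_derivative[OF this]
    show ?thesis unfolding \<phi>_def has_field_derivative_def by (rule has_derivative_at_withinI)
  qed
  from mvt_simple[OF \<open>0 < t\<close> this]
  obtain z where z: "z \<in> {0<..<t}" and "\<phi> t - \<phi> 0 = (H (x + z *\<^sub>R e) *v e) \<bullet> e * t"
    by auto
  moreover have "\<bar>(H (x + z *\<^sub>R e) *v e) \<bullet> e\<bar> \<le> M * norm e ^ 2"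
    using z inK by (intro abs_quadratic_form_le M) auto
  then have "- (M * norm e ^ 2) * t \<le> (H (x + z *\<^sub>R e) *v e) \<bullet> e * t"
    using \<open>0 < t\<close> by (intro mult_right_mono) (auto simp: abs_le_iff)
  ultimately have "- (M * norm e ^ 2) * t \<le> \<phi> t - \<phi> 0" by simp
  then show ?thesis by (simp add: \<phi>_def algebra_simps)
qed simp

text \<open>The orthant is open, so u could still be increased beyond the maximizer if the
  directional derivative were positive there.\<close>
lemma ray_maximizer_directional_derivative_nonpos:
  assumes "ray_maximizer u x e ts"
  shows "Du (x + ts *\<^sub>R e) \<bullet> e \<le> 0"
proof (rule ccontr)
  note max = ray_maximizerD[OF assms]
  assume "\<not> Du (x + ts *\<^sub>R e) \<bullet> e \<le> 0"
  then have "0 < Du (x + ts *\<^sub>R e) \<bullet> e" by simp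
  from has_real_derivative_pos_inc_right[OF has_real_derivative_along_ray[OF max(2)] this]
  obtain d where d: "d > 0" "\<And>h. 0 < h \<Longrightarrow> h < d \<Longrightarrow> u (x + ts *\<^sub>R e) < u (x + (ts + h) *\<^sub>R e)"
    by auto
  have "\<forall>\<^sub>F t in at_right ts. u (x + ts *\<^sub>R e) < u (x + t *\<^sub>R e)"
  proof (rule eventually_mono[OF eventually_at_right_real])
    show "ts < ts + d" using \<open>d > 0\<close> by simp
    fix t assume "t \<in> {ts<..<ts + d}"
    then show "u (x + ts *\<^sub>R e) < u (x + t *\<^sub>R e)" using d(2)[of "t - ts"] by simp
  qed
  moreover have "\<forall>\<^sub>F t in at_right ts. x + t *\<^sub>R e \<in> pos_orthant"
  proof -
    have "((\<lambda>t. x + t *\<^sub>R e) \<longlongrightarrow> x + ts *\<^sub>R e) (at_right ts)"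
      by (intro tendsto_intros tendsto_ident_at)
    then show ?thesis using topological_tendstoD open_pos_orthant max(2) by blast
  qed
  ultimately have "\<forall>\<^sub>F t in at_right ts. ts < t \<and> x + t *\<^sub>R e \<in> pos_orthant \<and> u (x + ts *\<^sub>R e) < u (x + t *\<^sub>R e)"
    by (intro eventually_conj eventually_at_right_less)
  then have "\<exists>t. ts < t \<and> x + t *\<^sub>R e \<in> pos_orthant \<and> u (x + ts *\<^sub>R e) < u (x + t *\<^sub>R e)"
    by (rule eventually_happens'[OF trivial_limit_at_right_real])
  then obtain t where "ts < t" "x + t *\<^sub>R e \<in> pos_orthant" "u (x + ts *\<^sub>R e) < u (x + t *\<^sub>R e)"
    by blast
  then show False using max(3)[of t] max(1) by auto
qed

text \<open>The maximizer lies beyond a/B, and the tangent inequality at a/(2B) yields the gain.\<close>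
lemma ray_maximizer_gain:
  assumes x: "x \<in> pos_orthant" and ts: "ray_maximizer u x e ts" and "0 < a" "0 < B"
    and slope: "\<And>t. 0 \<le> t \<Longrightarrow> t \<le> ts \<Longrightarrow> a - B * t \<le> Du (x + t *\<^sub>R e) \<bullet> e"
  shows "u x + a ^ 2 / (4 * B) \<le> u (x + ts *\<^sub>R e)"
proof -
  note max = ray_maximizerD[OF ts]
  have far: "a / B \<le> ts"
  proof (rule ccontr)
    assume "\<not> a / B \<le> ts"
    then have "0 < Du (x + ts *\<^sub>R e) \<bullet> e"
      using slope[of ts] max(1) \<open>0 < B\<close> by (simp add: field_simps)
    then show False using ray_maximizer_directional_derivative_nonpos[OF ts] by simp
  qed
  define \<eta> where "\<eta> = a / (2 * B)"
  have \<eta>: "0 \<le> \<eta>" "\<eta> \<le> ts" using \<open>0 < a\<close> \<open>0 < B\<close> far by (auto simp: \<eta>_def field_simps)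
  note q = ray_maximizer_mono[OF x ts \<eta>]
  have "a / 2 \<le> Du (x + \<eta> *\<^sub>R e) \<bullet> e"
    using slope[OF \<eta>] \<open>0 < B\<close> by (simp add: \<eta>_def)
  then have "\<eta> * (a / 2) \<le> \<eta> * (Du (x + \<eta> *\<^sub>R e) \<bullet> e)" using \<eta>(1) by (rule mult_left_mono)
  moreover have "\<eta> * (a / 2) = a ^ 2 / (4 * B)" using \<open>0 < B\<close> by (simp add: \<eta>_def power2_eq_square)
  moreover have "u x \<le> u (x + \<eta> *\<^sub>R e) - \<eta> * (Du (x + \<eta> *\<^sub>R e) \<bullet> e)"
    using le_tangent[OF q(1) x] by (simp add: inner_diff_right)
  moreover have "u (x + \<eta> *\<^sub>R e) \<le> u (x + ts *\<^sub>R e)" using max(3) q(1) \<eta> by simp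
  ultimately show ?thesis by linarith
qed

lemma ray_maximizer_gain_on_convex:
  assumes "convex K" "K \<subseteq> pos_orthant" and x: "x \<in> K" and ts: "ray_maximizer u x e ts"
    and xe: "x + ts *\<^sub>R e \<in> K"
    and M: "\<And>z. z \<in> K \<Longrightarrow> (\<Sum>i\<in>UNIV. \<Sum>j\<in>UNIV. \<bar>H z $ i $ j\<bar>) \<le> M"
    and "0 < a" "a \<le> Du x \<bullet> e" "0 < B" "M * norm e ^ 2 \<le> B"
  shows "u x + a ^ 2 / (4 * B) \<le> u (x + ts *\<^sub>R e)"
proof (rule ray_maximizer_gain[OF _ ts \<open>0 < a\<close> \<open>0 < B\<close>])
  show "x \<in> pos_orthant" using x \<open>K \<subseteq> pos_orthant\<close> by blast
  fix t assume t: "0 \<le> t" "t \<le> ts"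
  have "Du x \<bullet> e - M * norm e ^ 2 * t \<le> Du (x + t *\<^sub>R e) \<bullet> e"
    using directional_derivative_lower_bound[OF \<open>convex K\<close> \<open>K \<subseteq> pos_orthant\<close> x xe t M] .
  moreover have "M * norm e ^ 2 * t \<le> B * t" using \<open>M * norm e ^ 2 \<le> B\<close> t(1) by (rule mult_right_mono)
  ultimately show "a - B * t \<le> Du (x + t *\<^sub>R e) \<bullet> e" using \<open>a \<le> Du x \<bullet> e\<close> by linarith
qed

end

section \<open>Trades\<close>

definition attainable :: "(real^'g::finite \<Rightarrow> real) \<Rightarrow> real^'g \<Rightarrow> real^'g \<Rightarrow> (real^'g) set" where
  "attainable v x0 T = {z \<in> pos_orthant. v x0 \<le> v z \<and> (\<forall>k. z $ k \<le> T $ k)}"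

lemma attainable_subset: "attainable v x0 T \<subseteq> pos_orthant"
  by (auto simp: attainable_def)

lemma component_le_sum_pos_orthant:
  assumes "finite A" "i \<in> A" "\<And>l. l \<in> A \<Longrightarrow> y l \<in> pos_orthant"
  shows "y i $ k \<le> (\<Sum>l\<in>A. y l) $ k"
  unfolding sum_component using assms
  by (intro member_le_sum) (auto simp: pos_orthant_def intro: less_imp_le)

context utility
begin

lemma convex_attainable: "convex (attainable u x0 T)"
proof (rule convexI)
  fix x y :: "real^'g" and a b :: real
  assume x: "x \<in> attainable u x0 T" and y: "y \<in> attainable u x0 T"
    and ab: "0 \<le> a" "0 \<le> b" "a + b = 1"
  have X: "x \<in> pos_orthant" "y \<in> pos_orthant" using x y by (auto simp: attainable_def)
  have "u x0 = a * u x0 + b * u x0" using ab(3) by (simp flip: distrib_right)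
  also have "\<dots> \<le> a * u x + b * u y"
    using x y ab by (intro add_mono mult_left_mono) (auto simp: attainable_def)
  also have "\<dots> \<le> u (a *\<^sub>R x + b *\<^sub>R y)"
  proof -
    have "a = 1 - b" "b \<le> 1" using ab by linarith+
    then show ?thesis using concave_onD[OF concave, of b x y] X ab(2) by simp
  qed
  finally have "u x0 \<le> u (a *\<^sub>R x + b *\<^sub>R y)" .
  moreover have "a * x $ k + b * y $ k \<le> T $ k" for k
    using x y by (intro convex_bound_le ab) (simp_all add: attainable_def)
  ultimately show "a *\<^sub>R x + b *\<^sub>R y \<in> attainable u x0 T"
    using convexD[OF convex_pos_orthant X ab] by (auto simp: attainable_def)
qed

lemma compact_attainable:
  assumes "x0 \<in> pos_orthant"
  shows "compact (attainable u x0 T)"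
proof -
  have "attainable u x0 T = {z \<in> pos_orthant. u x0 \<le> u z} \<inter> (\<Inter>k. {z. z $ k \<le> T $ k})"
    by (auto simp: attainable_def)
  then have "closed (attainable u x0 T)"
    by (simp only:) (intro closed_Int closed_upper_level[OF assms] closed_INT ballI closed_halfspace_component_le_cart)
  moreover have "bounded (attainable u x0 T)"
  proof -
    have "norm z \<le> (\<Sum>k\<in>UNIV. T $ k)" if "z \<in> attainable u x0 T" for z
    proof -
      have "\<bar>z $ k\<bar> \<le> T $ k" for k
      proof -
        have "0 < z $ k" "z $ k \<le> T $ k" using that by (simp_all add: attainable_def pos_orthant_def)
        then show ?thesis by simp
      qed
      then have "(\<Sum>k\<in>UNIV. \<bar>z $ k\<bar>) \<le> (\<Sum>k\<in>UNIV. T $ k)" by (intro sum_mono)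
      then show ?thesis using norm_le_l1_cart[of z] by linarith
    qed
    then show ?thesis unfolding bounded_iff by blast
  qed
  ultimately show ?thesis by (simp add: compact_eq_bounded_closed)
qed

lemma budget_le_of_utility_le:
  assumes "z \<in> pos_orthant" "x \<in> pos_orthant" "\<And>j. j \<noteq> g0 \<Longrightarrow> thr g0 Du z j = p j"
    and "u z \<le> u x"
  shows "budget g0 p z \<le> budget g0 p x"
proof -
  have "0 \<le> Du z $ g0 * (budget g0 p x - budget g0 p z)" using le_budget[OF assms(1-3)] assms(4) by linarith
  then show ?thesis using Du_pos[OF assms(1), of g0] by (simp add: zero_le_mult_iff)
qed

lemma budget_less_of_utility_less:
  assumes "z \<in> pos_orthant" "x \<in> pos_orthant" "\<And>j. j \<noteq> g0 \<Longrightarrow> thr g0 Du z j = p j"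
    and "u z < u x"
  shows "budget g0 p z < budget g0 p x"
proof -
  have "0 < Du z $ g0 * (budget g0 p x - budget g0 p z)" using le_budget[OF assms(1-3)] assms(4) by linarith
  then show ?thesis using Du_pos[OF assms(1), of g0] by (simp add: zero_less_mult_iff)
qed

end

lemma thr_gap_of_no_trade:
  assumes "\<not> trade_available X u Du g0 m \<delta> s"
    and "i1 \<in> {1..m}" "i2 \<in> {1..m}" "j \<noteq> g0" "0 < s i1 $ j"
  shows "thr g0 (Du i2) (s i2) j - \<delta> i2 j < thr g0 (Du i1) (s i1) j + \<delta> i1 j"
proof (rule ccontr)
  assume "\<not> ?thesis"
  then have "trade_step X u Du g0 m \<delta> s (let \<xi> = min (xi_plus X (u i1) g0 j (s i1) (thr g0 (Du i1) (s i1) j + \<delta> i1 j))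
                   (xi_minus X (u i2) g0 j (s i2) (thr g0 (Du i1) (s i1) j + \<delta> i1 j))
       in s(i1 := s i1 + \<xi> *\<^sub>R dirv g0 j (thr g0 (Du i1) (s i1) j + \<delta> i1 j),
            i2 := s i2 - \<xi> *\<^sub>R dirv g0 j (thr g0 (Du i1) (s i1) j + \<delta> i1 j)))"
    unfolding trade_step_def using assms(2-5) by (intro exI[of _ i1] exI[of _ i2] exI[of _ j]) auto
  then show False using assms(1) unfolding trade_available_def by blast
qed

locale economy =
  fixes u :: "nat \<Rightarrow> real^'g::finite \<Rightarrow> real" and Du :: "nat \<Rightarrow> real^'g \<Rightarrow> real^'g"
    and H :: "nat \<Rightarrow> real^'g \<Rightarrow> real^'g^'g" and g0 :: 'g and m :: nat
  assumes agent_utility: "i \<in> {1..m} \<Longrightarrow> utility (u i) (Du i) (H i)"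
begin

lemma trade_step_cases:
  assumes s: "\<And>i. i \<in> {1..m} \<Longrightarrow> s i \<in> pos_orthant"
    and \<delta>: "\<And>i j. i \<in> {1..m} \<Longrightarrow> j \<noteq> g0 \<Longrightarrow> 0 < \<delta> i j"
    and "trade_step pos_orthant u Du g0 m \<delta> s s'"
  obtains i1 i2 j \<pi> \<xi>p \<xi>m where "i1 \<in> {1..m}" "i2 \<in> {1..m}" "i1 \<noteq> i2" "j \<noteq> g0" "0 < \<pi>"
    "thr g0 (Du i1) (s i1) j + \<delta> i1 j \<le> \<pi>" "\<pi> \<le> thr g0 (Du i2) (s i2) j - \<delta> i2 j"
    "ray_maximizer (u i1) (s i1) (dirv g0 j \<pi>) \<xi>p"
    "ray_maximizer (u i2) (s i2) (- dirv g0 j \<pi>) \<xi>m"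
    "s' = s(i1 := s i1 + min \<xi>p \<xi>m *\<^sub>R dirv g0 j \<pi>, i2 := s i2 + min \<xi>p \<xi>m *\<^sub>R (- dirv g0 j \<pi>))"
proof -
  obtain i1 i2 j \<pi> where i: "i1 \<in> {1..m}" "i2 \<in> {1..m}" "j \<noteq> g0"
    and thr: "thr g0 (Du i1) (s i1) j + \<delta> i1 j \<le> \<pi>" "\<pi> \<le> thr g0 (Du i2) (s i2) j - \<delta> i2 j"
    and s': "s' = s(i1 := s i1 + min (xi_plus pos_orthant (u i1) g0 j (s i1) \<pi>) (xi_minus pos_orthant (u i2) g0 j (s i2) \<pi>) *\<^sub>R dirv g0 j \<pi>,
                   i2 := s i2 - min (xi_plus pos_orthant (u i1) g0 j (s i1) \<pi>) (xi_minus pos_orthant (u i2) g0 j (s i2) \<pi>) *\<^sub>R dirv g0 j \<pi>)"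
    using assms(3) unfolding trade_step_def Let_def by blast
  have "0 < \<delta> i1 j" "0 < \<delta> i2 j" using \<delta> i by auto
  then have "i1 \<noteq> i2" using thr by auto
  have "0 < thr g0 (Du i1) (s i1) j" using utility.thr_pos[OF agent_utility[OF i(1)] s[OF i(1)]] .
  then have "0 < \<pi>" using thr \<open>0 < \<delta> i1 j\<close> by linarith
  have "ray_maximizer (u i1) (s i1) (dirv g0 j \<pi>) (xi_plus pos_orthant (u i1) g0 j (s i1) \<pi>)"
    unfolding xi_plus_def using i s by (intro utility.ray_maximizer_exists[OF agent_utility, of _ _ _ j]) (auto simp: dirv_nth)
  moreover have "ray_maximizer (u i2) (s i2) (- dirv g0 j \<pi>) (xi_minus pos_orthant (u i2) g0 j (s i2) \<pi>)"
    unfolding xi_minus_eq_arg_max using i s \<open>0 < \<pi>\<close>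
    by (intro utility.ray_maximizer_exists[OF agent_utility, of _ _ _ g0]) (auto simp: dirv_nth)
  ultimately show ?thesis
    using that[OF i(1,2) \<open>i1 \<noteq> i2\<close> i(3) \<open>0 < \<pi>\<close> thr] s' by simp
qed

lemma trade_step_holdings:
  assumes s: "\<And>i. i \<in> {1..m} \<Longrightarrow> s i \<in> pos_orthant"
    and \<delta>: "\<And>i j. i \<in> {1..m} \<Longrightarrow> j \<noteq> g0 \<Longrightarrow> 0 < \<delta> i j"
    and st: "trade_step pos_orthant u Du g0 m \<delta> s s'"
  shows "\<forall>i\<in>{1..m}. s' i \<in> pos_orthant \<and> u i (s i) \<le> u i (s' i)"
    and "(\<Sum>i\<in>{1..m}. s' i) = (\<Sum>i\<in>{1..m}. s i)"
proof -
  obtain i1 i2 j \<pi> \<xi>p \<xi>m where i: "i1 \<in> {1..m}" "i2 \<in> {1..m}" "i1 \<noteq> i2" "j \<noteq> g0" "0 < \<pi>"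
    and "thr g0 (Du i1) (s i1) j + \<delta> i1 j \<le> \<pi>" "\<pi> \<le> thr g0 (Du i2) (s i2) j - \<delta> i2 j"
    and max: "ray_maximizer (u i1) (s i1) (dirv g0 j \<pi>) \<xi>p"
      "ray_maximizer (u i2) (s i2) (- dirv g0 j \<pi>) \<xi>m"
    and s'_eq: "s' = s(i1 := s i1 + min \<xi>p \<xi>m *\<^sub>R dirv g0 j \<pi>, i2 := s i2 + min \<xi>p \<xi>m *\<^sub>R (- dirv g0 j \<pi>))"
    by (rule trade_step_cases[OF s \<delta> st])
  have "0 \<le> min \<xi>p \<xi>m" using ray_maximizerD(1)[OF max(1)] ray_maximizerD(1)[OF max(2)] by simp
  then have "s' i1 \<in> pos_orthant \<and> u i1 (s i1) \<le> u i1 (s' i1)"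
    and "s' i2 \<in> pos_orthant \<and> u i2 (s i2) \<le> u i2 (s' i2)"
    using utility.ray_maximizer_mono[OF agent_utility[OF i(1)] s[OF i(1)] max(1), of "min \<xi>p \<xi>m"]
      utility.ray_maximizer_mono[OF agent_utility[OF i(2)] s[OF i(2)] max(2), of "min \<xi>p \<xi>m"] i(3)
    by (simp_all add: s'_eq)
  then show "\<forall>i\<in>{1..m}. s' i \<in> pos_orthant \<and> u i (s i) \<le> u i (s' i)"
    using s by (auto simp: s'_eq)
  have "(\<Sum>l\<in>{1..m}. s' l) = (\<Sum>l\<in>{1..m}. s l + ((if l = i1 then min \<xi>p \<xi>m *\<^sub>R dirv g0 j \<pi> else 0)
                                        - (if l = i2 then min \<xi>p \<xi>m *\<^sub>R dirv g0 j \<pi> else 0)))"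
    using i by (intro sum.cong) (auto simp: s'_eq)
  then show "(\<Sum>i\<in>{1..m}. s' i) = (\<Sum>i\<in>{1..m}. s i)"
    using i by (simp add: sum.distrib sum_subtractf)
qed

text \<open>The trader whose optimal amount is exchanged reaches its ray maximizer, and its marginal
  gain along the ray starts at c d0 or more.\<close>
lemma trade_step_gain:
  assumes conv: "\<And>i. i \<in> {1..m} \<Longrightarrow> convex (K i)" and KX: "\<And>i. i \<in> {1..m} \<Longrightarrow> K i \<subseteq> pos_orthant"
    and s: "\<And>i. i \<in> {1..m} \<Longrightarrow> s i \<in> K i" and s': "\<And>i. i \<in> {1..m} \<Longrightarrow> s' i \<in> K i"
    and "0 < c" and c: "\<And>i z. i \<in> {1..m} \<Longrightarrow> z \<in> K i \<Longrightarrow> c \<le> Du i z $ g0"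
    and "0 \<le> M" and M: "\<And>i z. i \<in> {1..m} \<Longrightarrow> z \<in> K i \<Longrightarrow> (\<Sum>a\<in>UNIV. \<Sum>b\<in>UNIV. \<bar>H i z $ a $ b\<bar>) \<le> M"
    and P: "\<And>i z j. i \<in> {1..m} \<Longrightarrow> z \<in> K i \<Longrightarrow> thr g0 (Du i) z j \<le> P"
    and "0 < d0" and d0: "\<And>i j. i \<in> {1..m} \<Longrightarrow> j \<noteq> g0 \<Longrightarrow> d0 \<le> \<delta> i j"
    and st: "trade_step pos_orthant u Du g0 m \<delta> s s'"
  shows "\<exists>i\<in>{1..m}. u i (s i) + (c * d0) ^ 2 / (4 * (M * (P ^ 2 + 1) + 1)) \<le> u i (s' i)"
proof -
  have sX: "s i \<in> pos_orthant" if "i \<in> {1..m}" for i using s KX that by blast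
  have \<delta>: "0 < \<delta> i j" if "i \<in> {1..m}" "j \<noteq> g0" for i j using d0[OF that] \<open>0 < d0\<close> by linarith
  obtain i1 i2 j \<pi> \<xi>p \<xi>m where i: "i1 \<in> {1..m}" "i2 \<in> {1..m}" "i1 \<noteq> i2" "j \<noteq> g0" "0 < \<pi>"
    and thr: "thr g0 (Du i1) (s i1) j + \<delta> i1 j \<le> \<pi>" "\<pi> \<le> thr g0 (Du i2) (s i2) j - \<delta> i2 j"
    and max: "ray_maximizer (u i1) (s i1) (dirv g0 j \<pi>) \<xi>p"
      "ray_maximizer (u i2) (s i2) (- dirv g0 j \<pi>) \<xi>m"
    and s'_eq: "s' = s(i1 := s i1 + min \<xi>p \<xi>m *\<^sub>R dirv g0 j \<pi>, i2 := s i2 + min \<xi>p \<xi>m *\<^sub>R (- dirv g0 j \<pi>))"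
    by (rule trade_step_cases[OF sX \<delta> st])
  define B where "B = M * (P ^ 2 + 1) + 1"
  have "0 < B" using \<open>0 \<le> M\<close> by (simp add: B_def add_nonneg_pos)
  have "0 < c * d0" using \<open>0 < c\<close> \<open>0 < d0\<close> by simp
  have "\<pi> \<le> P" using thr(2) P[OF i(2) s[OF i(2)], of j] \<delta>[OF i(2,4)] by linarith
  then have "\<pi> ^ 2 \<le> P ^ 2" using \<open>0 < \<pi>\<close> by (intro power_mono) auto
  then have "M * (\<pi> ^ 2 + 1) \<le> B"
    unfolding B_def using mult_left_mono[of "\<pi> ^ 2 + 1" "P ^ 2 + 1" M] \<open>0 \<le> M\<close> by linarith
  then have norm_le: "M * norm (dirv g0 j \<pi>) ^ 2 \<le> B" "M * norm (- dirv g0 j \<pi>) ^ 2 \<le> B"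
    by (simp_all add: norm_dirv_squared[OF i(4)])
  have Du_g0: "c \<le> Du i (s i) $ g0" "0 < Du i (s i) $ g0" if "i \<in> {1..m}" for i
    using c[OF that s[OF that]] \<open>0 < c\<close> by auto
  have "c * d0 \<le> Du i1 (s i1) $ g0 * (\<pi> - thr g0 (Du i1) (s i1) j)"
    using Du_g0[OF i(1)] thr(1) d0[OF i(1,4)] \<open>0 < c\<close> \<open>0 < d0\<close> by (intro mult_mono) auto
  then have slope1: "c * d0 \<le> Du i1 (s i1) \<bullet> dirv g0 j \<pi>"
    using Du_g0(2)[OF i(1)] by (simp add: inner_dirv_thr[OF i(4)])
  have "c * d0 \<le> Du i2 (s i2) $ g0 * (thr g0 (Du i2) (s i2) j - \<pi>)"
    using Du_g0[OF i(2)] thr(2) d0[OF i(2,4)] \<open>0 < c\<close> \<open>0 < d0\<close> by (intro mult_mono) auto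
  then have slope2: "c * d0 \<le> Du i2 (s i2) \<bullet> (- dirv g0 j \<pi>)"
    using Du_g0(2)[OF i(2)] by (simp add: inner_dirv_thr[OF i(4)] algebra_simps)
  show ?thesis
  proof (cases "\<xi>p \<le> \<xi>m")
    case True
    then have "s' i1 = s i1 + \<xi>p *\<^sub>R dirv g0 j \<pi>" using i(3) by (simp add: s'_eq)
    then have "u i1 (s i1) + (c * d0) ^ 2 / (4 * B) \<le> u i1 (s' i1)"
      using utility.ray_maximizer_gain_on_convex[OF agent_utility[OF i(1)] conv[OF i(1)] KX[OF i(1)]
          s[OF i(1)] max(1) _ M[OF i(1)] \<open>0 < c * d0\<close> slope1 \<open>0 < B\<close> norm_le(1)] s'[OF i(1)]
      by simp
    then show ?thesis using i(1) unfolding B_def by blast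
  next
    case False
    then have "s' i2 = s i2 + \<xi>m *\<^sub>R (- dirv g0 j \<pi>)" using i(3) by (simp add: s'_eq)
    then have "u i2 (s i2) + (c * d0) ^ 2 / (4 * B) \<le> u i2 (s' i2)"
      using utility.ray_maximizer_gain_on_convex[OF agent_utility[OF i(2)] conv[OF i(2)] KX[OF i(2)]
          s[OF i(2)] max(2) _ M[OF i(2)] \<open>0 < c * d0\<close> slope2 \<open>0 < B\<close> norm_le(2)] s'[OF i(2)]
      by simp
    then show ?thesis using i(2) unfolding B_def by blast
  qed
qed

lemma trade_sequence_attainable:
  assumes s0: "\<And>i. i \<in> {1..m} \<Longrightarrow> s 0 i \<in> pos_orthant"
    and step: "\<And>k. (trade_step pos_orthant u Du g0 m (\<delta> k) (s k) (s (Suc k)) \<and>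
                     (\<forall>i\<in>{1..m}. \<forall>j. j \<noteq> g0 \<longrightarrow> 0 < \<delta> k i j)) \<or> s (Suc k) = s k"
  shows "(\<forall>i\<in>{1..m}. s k i \<in> attainable (u i) (s 0 i) (\<Sum>l\<in>{1..m}. s 0 l))
    \<and> (\<Sum>l\<in>{1..m}. s k l) = (\<Sum>l\<in>{1..m}. s 0 l)"
proof (induction k)
  case 0
  show ?case
    using s0 component_le_sum_pos_orthant[of "{1..m}" _ "s 0"] by (auto simp: attainable_def)
next
  case (Suc k)
  have sX: "s k i \<in> pos_orthant" if "i \<in> {1..m}" for i
    using Suc.IH attainable_subset that by blast
  consider "s (Suc k) = s k"
    | "trade_step pos_orthant u Du g0 m (\<delta> k) (s k) (s (Suc k))"
      "\<And>i j. i \<in> {1..m} \<Longrightarrow> j \<noteq> g0 \<Longrightarrow> 0 < \<delta> k i j"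
    using step[of k] by blast
  then show ?case
  proof cases
    case 1
    then show ?thesis using Suc.IH by simp
  next
    case 2
    note holdings = trade_step_holdings[OF sX 2(2) 2(1)]
    have total: "(\<Sum>l\<in>{1..m}. s (Suc k) l) = (\<Sum>l\<in>{1..m}. s 0 l)"
      using holdings(2) Suc.IH by simp
    have "s (Suc k) i \<in> attainable (u i) (s 0 i) (\<Sum>l\<in>{1..m}. s 0 l)" if i: "i \<in> {1..m}" for i
    proof -
      have pos: "s (Suc k) l \<in> pos_orthant" if "l \<in> {1..m}" for l using holdings(1) that by blast
      have "s (Suc k) i $ c \<le> (\<Sum>l\<in>{1..m}. s 0 l) $ c" for c
        using component_le_sum_pos_orthant[of "{1..m}" i "s (Suc k)" c] pos i unfolding total by blast
      moreover have "u i (s 0 i) \<le> u i (s (Suc k) i)"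
        using Suc.IH holdings(1) i order_trans by (fastforce simp: attainable_def)
      ultimately show ?thesis using pos[OF i] by (simp add: attainable_def)
    qed
    with total show ?thesis by blast
  qed
qed

lemma attainable_uniform_bounds:
  assumes x0: "\<And>i. i \<in> {1..m} \<Longrightarrow> x0 i \<in> pos_orthant"
  obtains c M P U where "0 < c" "0 \<le> M"
    "\<And>i z. i \<in> {1..m} \<Longrightarrow> z \<in> attainable (u i) (x0 i) (\<Sum>l\<in>{1..m}. x0 l) \<Longrightarrow> c \<le> Du i z $ g0"
    "\<And>i z. i \<in> {1..m} \<Longrightarrow> z \<in> attainable (u i) (x0 i) (\<Sum>l\<in>{1..m}. x0 l) \<Longrightarrow> (\<Sum>a\<in>UNIV. \<Sum>b\<in>UNIV. \<bar>H i z $ a $ b\<bar>) \<le> M"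
    "\<And>i z j. i \<in> {1..m} \<Longrightarrow> z \<in> attainable (u i) (x0 i) (\<Sum>l\<in>{1..m}. x0 l) \<Longrightarrow> thr g0 (Du i) z j \<le> P"
    "\<And>i z. i \<in> {1..m} \<Longrightarrow> z \<in> attainable (u i) (x0 i) (\<Sum>l\<in>{1..m}. x0 l) \<Longrightarrow> u i z \<le> U"
proof -
  let ?K = "\<lambda>i. attainable (u i) (x0 i) (\<Sum>l\<in>{1..m}. x0 l)"
  have K: "compact (?K i)" if "i \<in> {1..m}" for i
    using utility.compact_attainable[OF agent_utility[OF that] x0[OF that]] .
  have KX: "?K i \<subseteq> pos_orthant" for i by (rule attainable_subset)
  have Du: "continuous_on (?K i) (Du i)" and H: "continuous_on (?K i) (H i)"
    and u: "continuous_on (?K i) (u i)" if "i \<in> {1..m}" for i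
    using utility.continuous_on_Du[OF agent_utility[OF that]] utility.continuous_on_H[OF agent_utility[OF that]]
      utility.continuous_on_u[OF agent_utility[OF that]] KX
    by (auto intro: continuous_on_subset)
  have Du_pos: "0 < Du i z $ j" if "i \<in> {1..m}" "z \<in> ?K i" for i z j
    using utility.Du_pos[OF agent_utility[OF that(1)]] that(2) KX by blast
  have "continuous_on (?K i) (\<lambda>z. Du i z $ g0)" if "i \<in> {1..m}" for i
    using Du[OF that] by (rule continuous_on_component)
  then have "\<exists>c>0. \<forall>i\<in>{1..m}. \<forall>z\<in>?K i. c \<le> Du i z $ g0"
    by (intro compact_family_pos_bounded_below) (use K Du_pos in auto)
  then obtain c where "0 < c" "\<forall>i\<in>{1..m}. \<forall>z\<in>?K i. c \<le> Du i z $ g0" by blast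
  moreover have "continuous_on (?K i) (\<lambda>z. \<Sum>a\<in>UNIV. \<Sum>b\<in>UNIV. \<bar>H i z $ a $ b\<bar>)" if "i \<in> {1..m}" for i
    using H[OF that] by (intro continuous_intros)
  then have "\<exists>M. \<forall>i\<in>{1..m}. \<forall>z\<in>?K i. (\<Sum>a\<in>UNIV. \<Sum>b\<in>UNIV. \<bar>H i z $ a $ b\<bar>) \<le> M"
    by (intro compact_family_bounded_above) (use K in auto)
  then obtain M where "\<forall>i\<in>{1..m}. \<forall>z\<in>?K i. (\<Sum>a\<in>UNIV. \<Sum>b\<in>UNIV. \<bar>H i z $ a $ b\<bar>) \<le> M" by blast
  moreover have "continuous_on (?K i) (\<lambda>z. thr g0 (Du i) z j)" if "(i, j) \<in> {1..m} \<times> UNIV" for i j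
  proof -
    have "i \<in> {1..m}" using that by simp
    from utility.continuous_on_thr[OF agent_utility[OF this] KX] show ?thesis .
  qed
  then have "\<exists>P. \<forall>ij\<in>{1..m} \<times> UNIV. \<forall>z\<in>?K (fst ij). thr g0 (Du (fst ij)) z (snd ij) \<le> P"
    by (intro compact_family_bounded_above) (use K in auto)
  then obtain P where "\<forall>(i, j)\<in>{1..m} \<times> UNIV. \<forall>z\<in>?K i. thr g0 (Du i) z j \<le> P" by auto
  moreover have "\<exists>U. \<forall>i\<in>{1..m}. \<forall>z\<in>?K i. u i z \<le> U"
    by (intro compact_family_bounded_above) (use K u in auto)
  then obtain U where "\<forall>i\<in>{1..m}. \<forall>z\<in>?K i. u i z \<le> U" by blast
  ultimately show ?thesis
    using that[of c "max M 0" P U] by fastforce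
qed

lemma sum_plus_gain_le:
  fixes f g :: "'a \<Rightarrow> real"
  assumes "finite A" "\<And>l. l \<in> A \<Longrightarrow> g l \<le> f l" "i \<in> A" "g i + \<gamma> \<le> f i"
  shows "(\<Sum>l\<in>A. g l) + \<gamma> \<le> (\<Sum>l\<in>A. f l)"
proof -
  have "f i - g i \<le> (\<Sum>l\<in>A. f l - g l)"
    using assms by (intro member_le_sum) auto
  then show ?thesis using assms(4) by (simp add: sum_subtractf)
qed

lemma uniform_increase_unbounded:
  fixes f :: "nat \<Rightarrow> real"
  assumes "0 < \<gamma>" "\<And>k. f k + \<gamma> \<le> f (Suc k)"
  shows "\<exists>k. U < f k"
proof -
  have grow: "f 0 + real k * \<gamma> \<le> f k" for k
  proof (induction k)
    case (Suc k)
    then show ?case using assms(2)[of k] by (simp add: distrib_right)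
  qed simp
  obtain k where "U - f 0 < real k * \<gamma>" using reals_Archimedean3[OF assms(1)] by blast
  then show ?thesis using grow[of k] by (intro exI[of _ k]) linarith
qed

text \<open>Every trade raises some agent's utility by a fixed amount, while total utility stays
  bounded on the compact attainable sets.\<close>
lemma trade_sequence_terminates:
  assumes s0: "\<And>i. i \<in> {1..m} \<Longrightarrow> s 0 i \<in> pos_orthant"
    and \<delta>: "\<And>i j. i \<in> {1..m} \<Longrightarrow> j \<noteq> g0 \<Longrightarrow> 0 < \<delta> i j"
  shows "\<not> (\<forall>k. trade_step pos_orthant u Du g0 m \<delta> (s k) (s (Suc k)))"
proof
  assume st: "\<forall>k. trade_step pos_orthant u Du g0 m \<delta> (s k) (s (Suc k))"
  let ?K = "\<lambda>i. attainable (u i) (s 0 i) (\<Sum>l\<in>{1..m}. s 0 l)"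
  have sK: "s k i \<in> ?K i" if "i \<in> {1..m}" for k i
    using trade_sequence_attainable[of s "\<lambda>_. \<delta>" k] s0 st \<delta> that by blast
  have conv: "convex (?K i)" if "i \<in> {1..m}" for i
    using utility.convex_attainable[OF agent_utility[OF that]] .
  obtain c M P U where bounds: "0 < c" "0 \<le> M"
    "\<And>i z. i \<in> {1..m} \<Longrightarrow> z \<in> ?K i \<Longrightarrow> c \<le> Du i z $ g0"
    "\<And>i z. i \<in> {1..m} \<Longrightarrow> z \<in> ?K i \<Longrightarrow> (\<Sum>a\<in>UNIV. \<Sum>b\<in>UNIV. \<bar>H i z $ a $ b\<bar>) \<le> M"
    "\<And>i z j. i \<in> {1..m} \<Longrightarrow> z \<in> ?K i \<Longrightarrow> thr g0 (Du i) z j \<le> P"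
    "\<And>i z. i \<in> {1..m} \<Longrightarrow> z \<in> ?K i \<Longrightarrow> u i z \<le> U"
    using attainable_uniform_bounds[of "s 0", OF s0] by blast
  obtain d0 where d0: "0 < d0" "\<And>i j. i \<in> {1..m} \<Longrightarrow> j \<noteq> g0 \<Longrightarrow> d0 \<le> \<delta> i j"
    using finite_pos_lower_bound[of "{1..m} \<times> (UNIV - {g0})" "\<lambda>(i, j). \<delta> i j"] \<delta> by force
  define \<gamma> where "\<gamma> = (c * d0) ^ 2 / (4 * (M * (P ^ 2 + 1) + 1))"
  have "0 < \<gamma>" unfolding \<gamma>_def using bounds(1,2) d0(1) by (simp add: add_nonneg_pos)
  have gain: "(\<Sum>i\<in>{1..m}. u i (s k i)) + \<gamma> \<le> (\<Sum>i\<in>{1..m}. u i (s (Suc k) i))" for k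
  proof -
    have sX: "s k i \<in> pos_orthant" if "i \<in> {1..m}" for i using sK attainable_subset that by blast
    have "\<exists>i\<in>{1..m}. u i (s k i) + \<gamma> \<le> u i (s (Suc k) i)"
      unfolding \<gamma>_def by (rule trade_step_gain[where K = ?K and \<delta> = \<delta> and s = "s k" and s' = "s (Suc k)",
          OF conv attainable_subset sK sK bounds(1,3,2,4,5) d0 st[rule_format]])
    then obtain i where "i \<in> {1..m}" "u i (s k i) + \<gamma> \<le> u i (s (Suc k) i)" by blast
    then show ?thesis
      using trade_step_holdings(1)[OF sX \<delta> st[rule_format]] by (intro sum_plus_gain_le) auto
  qed
  have "\<exists>k. (\<Sum>i\<in>{1..m}. U) < (\<Sum>i\<in>{1..m}. u i (s k i))"
    by (rule uniform_increase_unbounded[OF \<open>0 < \<gamma>\<close>]) (rule gain)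
  moreover have "(\<Sum>i\<in>{1..m}. u i (s k i)) \<le> (\<Sum>i\<in>{1..m}. U)" for k
    using sK bounds(6) by (intro sum_mono) auto
  ultimately show False by (meson not_le)
qed

text \<open>The midpoint of z and w is weakly better for all agents and strictly better for an agent
  whose holdings differ, hence strictly more expensive in total at the common prices, although it
  has the same total.\<close>
lemma equal_thr_allocation_unique:
  assumes z: "\<And>i. i \<in> {1..m} \<Longrightarrow> z i \<in> pos_orthant" and w: "\<And>i. i \<in> {1..m} \<Longrightarrow> w i \<in> pos_orthant"
    and p: "\<And>i j. i \<in> {1..m} \<Longrightarrow> j \<noteq> g0 \<Longrightarrow> thr g0 (Du i) (z i) j = p j"
    and uw: "\<And>i. i \<in> {1..m} \<Longrightarrow> u i (w i) = u i (z i)"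
    and total: "(\<Sum>i\<in>{1..m}. w i) = (\<Sum>i\<in>{1..m}. z i)"
    and i: "i \<in> {1..m}"
  shows "w i = z i"
proof (rule ccontr)
  assume "w i \<noteq> z i"
  define v where "v l = z l + (1/2) *\<^sub>R (w l - z l)" for l
  have v: "v l \<in> pos_orthant" "u l (z l) \<le> u l (v l)" if "l \<in> {1..m}" for l
    using utility.segment_upper_level[OF agent_utility[OF that] z[OF that] w[OF that], of "1/2"] uw[OF that]
    by (simp_all add: v_def)
  have le: "budget g0 p (z l) \<le> budget g0 p (v l)" if "l \<in> {1..m}" for l
    using utility.budget_le_of_utility_le[OF agent_utility[OF that] z[OF that] v(1)[OF that] p[OF that] v(2)[OF that]] .
  have "u i (z i) < u i (v i)"
    unfolding v_def using utility.level_midpoint_gt[OF agent_utility[OF i] z[OF i] w[OF i] \<open>w i \<noteq> z i\<close> uw[OF i]] .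
  then have "budget g0 p (z i) < budget g0 p (v i)"
    using utility.budget_less_of_utility_less[OF agent_utility[OF i] z[OF i] v(1)[OF i] p[OF i]] by blast
  then have "(\<Sum>l\<in>{1..m}. budget g0 p (z l)) < (\<Sum>l\<in>{1..m}. budget g0 p (v l))"
    using le i by (intro sum_strict_mono_ex1) auto
  moreover have "(\<Sum>l\<in>{1..m}. v l) = (\<Sum>l\<in>{1..m}. z l)"
    using total by (simp add: v_def sum.distrib sum_subtractf flip: scaleR_sum_right)
  ultimately show False by (simp flip: budget_sum)
qed

end

section \<open>The staged process\<close>

locale staged_trading = economy u Du H g0 m
  for u :: "nat \<Rightarrow> real^'g::finite \<Rightarrow> real" and Du :: "nat \<Rightarrow> real^'g \<Rightarrow> real^'g"
    and H :: "nat \<Rightarrow> real^'g \<Rightarrow> real^'g^'g" and g0 :: 'g and m :: nat +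
  fixes x0 :: "nat \<Rightarrow> real^'g" and \<delta> :: "nat \<Rightarrow> nat \<Rightarrow> 'g \<Rightarrow> real"
    and y :: "nat \<Rightarrow> nat \<Rightarrow> real^'g" and stage :: "nat \<Rightarrow> nat"
  assumes init: "\<And>i. i \<in> {1..m} \<Longrightarrow> x0 i \<in> pos_orthant"
    and premium_pos: "\<And>k i j. i \<in> {1..m} \<Longrightarrow> j \<noteq> g0 \<Longrightarrow> 0 < \<delta> k i j"
    and premium_decreasing: "\<And>k i j. i \<in> {1..m} \<Longrightarrow> j \<noteq> g0 \<Longrightarrow> \<delta> (Suc k) i j \<le> \<delta> k i j"
    and premium_tendsto_0: "\<And>i j. i \<in> {1..m} \<Longrightarrow> j \<noteq> g0 \<Longrightarrow> (\<lambda>k. \<delta> k i j) \<longlonglongrightarrow> 0"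
    and y0: "y 0 = x0" and stage0: "stage 0 = 0"
    and step: "\<And>t. (trade_step pos_orthant u Du g0 m (\<delta> (stage t)) (y t) (y (Suc t))
                     \<and> stage (Suc t) = stage t)
                 \<or> (\<not> trade_available pos_orthant u Du g0 m (\<delta> (stage t)) (y t)
                     \<and> y (Suc t) = y t \<and> stage (Suc t) = Suc (stage t))"
begin

abbreviation attainable_holdings :: "nat \<Rightarrow> (real^'g) set" where
  "attainable_holdings i \<equiv> attainable (u i) (x0 i) (\<Sum>l\<in>{1..m}. x0 l)"

lemma holdings_attainable: "i \<in> {1..m} \<Longrightarrow> y t i \<in> attainable_holdings i"
  and total_holdings: "(\<Sum>l\<in>{1..m}. y t l) = (\<Sum>l\<in>{1..m}. x0 l)"
proof -
  have "(trade_step pos_orthant u Du g0 m (\<delta> (stage t)) (y t) (y (Suc t)) \<and>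
          (\<forall>i\<in>{1..m}. \<forall>j. j \<noteq> g0 \<longrightarrow> 0 < \<delta> (stage t) i j)) \<or> y (Suc t) = y t" for t
    using step[of t] premium_pos by blast
  from trade_sequence_attainable[of y "\<lambda>t. \<delta> (stage t)", OF _ this]
  show "i \<in> {1..m} \<Longrightarrow> y t i \<in> attainable_holdings i" "(\<Sum>l\<in>{1..m}. y t l) = (\<Sum>l\<in>{1..m}. x0 l)"
    using init by (auto simp: y0)
qed

lemma holdings_pos: "i \<in> {1..m} \<Longrightarrow> y t i \<in> pos_orthant"
  using holdings_attainable attainable_subset by blast

lemma compact_attainable_holdings: "i \<in> {1..m} \<Longrightarrow> compact (attainable_holdings i)"
  by (rule utility.compact_attainable[OF agent_utility init])

lemma stage_le: "stage t \<le> t"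
proof (induction t)
  case (Suc t)
  then show ?case using step[of t] by auto
qed (simp add: stage0)

lemma stage_mono:
  assumes "t1 \<le> t2"
  shows "stage t1 \<le> stage t2"
proof (rule lift_Suc_mono_le[OF _ assms])
  show "stage t \<le> stage (Suc t)" for t using step[of t] by (elim disjE) simp_all
qed

lemma premium_antimono:
  assumes "i \<in> {1..m}" "j \<noteq> g0" "k1 \<le> k2"
  shows "\<delta> k2 i j \<le> \<delta> k1 i j"
  by (rule lift_Suc_antimono_le[of "\<lambda>k. \<delta> k i j", OF _ assms(3)]) (use premium_decreasing assms in auto)

text \<open>Every stage ends, by the finiteness of trade sequences with fixed premiums.\<close>
lemma stage_ends_unbounded:
  "\<exists>t. \<not> trade_available pos_orthant u Du g0 m (\<delta> (stage t)) (y t) \<and> k \<le> stage t"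
proof -
  have stage_end: "\<exists>t\<ge>t0. \<not> trade_available pos_orthant u Du g0 m (\<delta> (stage t)) (y t)" for t0
  proof (rule ccontr)
    assume "\<not> ?thesis"
    then have trade: "trade_step pos_orthant u Du g0 m (\<delta> (stage t)) (y t) (y (Suc t))"
      and same: "stage (Suc t) = stage t" if "t \<ge> t0" for t
      using step[of t] that by auto
    have "stage (t0 + n) = stage t0" for n
      by (induction n) (simp_all add: same)
    then have "\<forall>n. trade_step pos_orthant u Du g0 m (\<delta> (stage t0)) (y (t0 + n)) (y (Suc (t0 + n)))"
      using trade by (metis le_add1)
    then show False
      using trade_sequence_terminates[of "\<lambda>n. y (t0 + n)" "\<delta> (stage t0)"] holdings_pos premium_pos
      by auto
  qed
  show ?thesis
  proof (induction k)
    case 0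
    then show ?case using stage_end[of 0] by blast
  next
    case (Suc k)
    then obtain t where t: "\<not> trade_available pos_orthant u Du g0 m (\<delta> (stage t)) (y t)" "k \<le> stage t"
      by blast
    then have "stage (Suc t) = Suc (stage t)" using step[of t] unfolding trade_available_def by blast
    moreover obtain t' where "t' \<ge> Suc t" "\<not> trade_available pos_orthant u Du g0 m (\<delta> (stage t')) (y t')"
      using stage_end by blast
    ultimately show ?case using stage_mono[of "Suc t" t'] t(2) by (intro exI[of _ t']) auto
  qed
qed

definition limit_utility :: "nat \<Rightarrow> real" where
  "limit_utility i = lim (\<lambda>t. u i (y t i))"

lemma tendsto_limit_utility:
  assumes i: "i \<in> {1..m}"
  shows "(\<lambda>t. u i (y t i)) \<longlonglongrightarrow> limit_utility i"
proof -
  have "u i (y t i) \<le> u i (y (Suc t) i)" for t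
  proof (cases "y (Suc t) = y t")
    case False
    then have "trade_step pos_orthant u Du g0 m (\<delta> (stage t)) (y t) (y (Suc t))" using step[of t] by auto
    from trade_step_holdings(1)[OF holdings_pos premium_pos this] i show ?thesis by blast
  qed simp
  then have "incseq (\<lambda>t. u i (y t i))" by (rule incseq_SucI)
  moreover obtain U where "\<And>t. u i (y t i) \<le> U"
    using attainable_uniform_bounds[of x0, OF init] holdings_attainable[OF i] i by metis
  ultimately show ?thesis
    unfolding limit_utility_def by (metis incseq_convergent convergent_LIMSEQ_iff convergentI)
qed

lemma limit_point_attainable:
  assumes q: "filterlim q at_top sequentially" and w: "\<And>i. i \<in> {1..m} \<Longrightarrow> (\<lambda>n. y (q n) i) \<longlonglongrightarrow> w i"
  shows "\<And>i. i \<in> {1..m} \<Longrightarrow> w i \<in> attainable_holdings i \<and> u i (w i) = limit_utility i"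
    and "(\<Sum>l\<in>{1..m}. w l) = (\<Sum>l\<in>{1..m}. x0 l)"
proof -
  fix i assume i: "i \<in> {1..m}"
  have wK: "w i \<in> attainable_holdings i"
    by (rule closed_sequentially[OF compact_imp_closed[OF compact_attainable_holdings[OF i]]])
      (use holdings_attainable[OF i] w[OF i] in auto)
  have "isCont (u i) (w i)" using utility.isCont_u[OF agent_utility[OF i]] wK attainable_subset by blast
  then have "(\<lambda>n. u i (y (q n) i)) \<longlonglongrightarrow> u i (w i)" using w[OF i] by (rule isCont_tendsto_compose)
  moreover have "(\<lambda>n. u i (y (q n) i)) \<longlonglongrightarrow> limit_utility i"
    using filterlim_compose[OF tendsto_limit_utility[OF i] q] by (simp add: o_def)
  ultimately have "u i (w i) = limit_utility i" by (rule LIMSEQ_unique)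
  with wK show "w i \<in> attainable_holdings i \<and> u i (w i) = limit_utility i" by simp
next
  have "(\<lambda>n. \<Sum>l\<in>{1..m}. y (q n) l) \<longlonglongrightarrow> (\<Sum>l\<in>{1..m}. w l)"
    by (rule tendsto_sum) (rule w)
  then have "(\<lambda>n. \<Sum>l\<in>{1..m}. x0 l) \<longlonglongrightarrow> (\<Sum>l\<in>{1..m}. w l)" by (simp only: total_holdings)
  then show "(\<Sum>l\<in>{1..m}. w l) = (\<Sum>l\<in>{1..m}. x0 l)" by (simp add: LIMSEQ_const_iff)
qed

text \<open>At a stage end no trade is available, so the thresholds of any two agents differ by at
  most the sum of their premiums, and these tend to 0.\<close>
lemma stage_end_limit_thr_le:
  assumes e: "\<And>k. \<not> trade_available pos_orthant u Du g0 m (\<delta> (stage (e k))) (y (e k))"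
      "\<And>k. k \<le> stage (e k)"
    and r: "strict_mono r"
    and z: "\<And>i. i \<in> {1..m} \<Longrightarrow> (\<lambda>n. y (e (r n)) i) \<longlonglongrightarrow> z i" "\<And>i. i \<in> {1..m} \<Longrightarrow> z i \<in> pos_orthant"
    and i: "i1 \<in> {1..m}" "i2 \<in> {1..m}" and j: "j \<noteq> g0"
  shows "thr g0 (Du i2) (z i2) j \<le> thr g0 (Du i1) (z i1) j"
proof -
  have lim: "(\<lambda>n. thr g0 (Du i) (y (e (r n)) i) j) \<longlonglongrightarrow> thr g0 (Du i) (z i) j" if "i \<in> {1..m}" for i
    using utility.tendsto_thr[OF agent_utility[OF that] z(2)[OF that] z(1)[OF that]] .
  have gap: "thr g0 (Du i2) (y (e (r n)) i2) j - thr g0 (Du i1) (y (e (r n)) i1) j \<le> \<delta> n i1 j + \<delta> n i2 j" for n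
  proof -
    have "n \<le> stage (e (r n))" using e(2)[of "r n"] seq_suble[OF r, of n] by linarith
    then have "\<delta> (stage (e (r n))) i1 j \<le> \<delta> n i1 j" "\<delta> (stage (e (r n))) i2 j \<le> \<delta> n i2 j"
      using premium_antimono i j by blast+
    moreover have "0 < y (e (r n)) i1 $ j" using holdings_pos[OF i(1)] by (simp add: pos_orthant_def)
    ultimately show ?thesis using thr_gap_of_no_trade[OF e(1) i j] by fastforce
  qed
  have "thr g0 (Du i2) (z i2) j - thr g0 (Du i1) (z i1) j \<le> 0 + 0"
    using gap by (intro LIMSEQ_le[OF tendsto_diff[OF lim[OF i(2)] lim[OF i(1)]]
          tendsto_add[OF premium_tendsto_0[OF i(1) j] premium_tendsto_0[OF i(2) j]]]) auto
  then show ?thesis by simp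
qed

lemma equal_thr_limit_point_exists:
  "\<exists>z p. (\<forall>i\<in>{1..m}. z i \<in> attainable_holdings i \<and> u i (z i) = limit_utility i
                      \<and> (\<forall>j. j \<noteq> g0 \<longrightarrow> thr g0 (Du i) (z i) j = p j))
         \<and> (\<Sum>l\<in>{1..m}. z l) = (\<Sum>l\<in>{1..m}. x0 l)"
proof -
  have "\<forall>k. \<exists>t. \<not> trade_available pos_orthant u Du g0 m (\<delta> (stage t)) (y t) \<and> k \<le> stage t"
    using stage_ends_unbounded by blast
  from choice[OF this] obtain e
    where "\<forall>k. \<not> trade_available pos_orthant u Du g0 m (\<delta> (stage (e k))) (y (e k)) \<and> k \<le> stage (e k)"
    by blast
  then have e: "\<And>k. \<not> trade_available pos_orthant u Du g0 m (\<delta> (stage (e k))) (y (e k))"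
    "\<And>k. k \<le> stage (e k)"
    by simp_all
  have "\<exists>r z. strict_mono r \<and> (\<forall>i\<in>{1..m}. z i \<in> attainable_holdings i \<and> (\<lambda>n. y (e (r n)) i) \<longlonglongrightarrow> z i)"
    by (rule finite_family_convergent_subseq[of "{1..m}" attainable_holdings "\<lambda>n. y (e n)"])
      (blast intro: compact_attainable_holdings holdings_attainable)+
  then obtain r z where r: "strict_mono r"
    and z: "\<forall>i\<in>{1..m}. z i \<in> attainable_holdings i \<and> (\<lambda>n. y (e (r n)) i) \<longlonglongrightarrow> z i"
    by blast
  have "filterlim (\<lambda>n. e (r n)) at_top sequentially"
  proof (rule filterlim_at_top_mono[OF filterlim_subseq[OF r]])
    show "\<forall>\<^sub>F n in sequentially. r n \<le> e (r n)"
      by (intro always_eventually allI order_trans[OF e(2) stage_le])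
  qed
  note lp = limit_point_attainable[OF this, of z]
  have thr_le: "thr g0 (Du i2) (z i2) j \<le> thr g0 (Du i1) (z i1) j"
    if "i1 \<in> {1..m}" "i2 \<in> {1..m}" "j \<noteq> g0" for i1 i2 j
    using stage_end_limit_thr_le[OF e r, of z] z attainable_subset that by blast
  define p where "p j = thr g0 (Du 1) (z 1) j" for j
  have "thr g0 (Du i) (z i) j = p j" if "i \<in> {1..m}" "j \<noteq> g0" for i j
    using thr_le[of i 1 j] thr_le[of 1 i j] that unfolding p_def by fastforce
  then show ?thesis using lp z by blast
qed

lemma holdings_converge:
  obtains z p where "\<And>i. i \<in> {1..m} \<Longrightarrow> (\<lambda>t. y t i) \<longlonglongrightarrow> z i"
    "\<And>i. i \<in> {1..m} \<Longrightarrow> z i \<in> pos_orthant"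
    "\<And>i j. i \<in> {1..m} \<Longrightarrow> j \<noteq> g0 \<Longrightarrow> thr g0 (Du i) (z i) j = p j"
    "(\<Sum>l\<in>{1..m}. z l) = (\<Sum>l\<in>{1..m}. x0 l)"
proof -
  obtain z p where z: "\<forall>i\<in>{1..m}. z i \<in> attainable_holdings i \<and> u i (z i) = limit_utility i
                      \<and> (\<forall>j. j \<noteq> g0 \<longrightarrow> thr g0 (Du i) (z i) j = p j)"
    and total: "(\<Sum>l\<in>{1..m}. z l) = (\<Sum>l\<in>{1..m}. x0 l)"
    using equal_thr_limit_point_exists by blast
  have zX: "z i \<in> pos_orthant" if "i \<in> {1..m}" for i using z that attainable_subset by blast
  have "(\<lambda>t. y t i) \<longlonglongrightarrow> z i" if i: "i \<in> {1..m}" for i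
  proof (rule finite_family_tendsto_unique_limit_point[of "{1..m}" attainable_holdings])
    fix r w assume "strict_mono r" and w: "\<forall>i\<in>{1..m}. (\<lambda>n. y (r n) i) \<longlonglongrightarrow> w i"
    then have wlim: "\<And>i. i \<in> {1..m} \<Longrightarrow> (\<lambda>n. y (r n) i) \<longlonglongrightarrow> w i" by blast
    note r = filterlim_subseq[OF \<open>strict_mono r\<close>]
    have lp: "w i \<in> attainable_holdings i \<and> u i (w i) = limit_utility i" if "i \<in> {1..m}" for i
      using r wlim that by (rule limit_point_attainable(1))
    have wX: "w i \<in> pos_orthant" if "i \<in> {1..m}" for i
      using lp[OF that] attainable_subset by blast
    have uw: "u i (w i) = u i (z i)" if "i \<in> {1..m}" for i
      using lp[OF that] z that by simp
    have "(\<Sum>l\<in>{1..m}. w l) = (\<Sum>l\<in>{1..m}. z l)"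
      using limit_point_attainable(2)[OF r wlim] total by simp
    then show "\<forall>i\<in>{1..m}. w i = z i"
      using equal_thr_allocation_unique[of z w p] zX wX uw z by blast
  qed (use compact_attainable_holdings holdings_attainable i in auto)
  then show ?thesis using that zX z total by blast
qed

lemma equilibrium_limit:
  "\<exists>xbar pbar.
     (\<forall>i\<in>{1..m}. (\<lambda>t. y t i) \<longlonglongrightarrow> xbar i \<and>
        (\<forall>j. j \<noteq> g0 \<longrightarrow> (\<lambda>t. thr g0 (Du i) (y t i) j) \<longlonglongrightarrow> pbar j \<and> thr g0 (Du i) (xbar i) j = pbar j)) \<and>
     equilibrium pos_orthant u g0 m x0 xbar pbar"
proof -
  obtain z p where lim: "\<And>i. i \<in> {1..m} \<Longrightarrow> (\<lambda>t. y t i) \<longlonglongrightarrow> z i"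
    and zX: "\<And>i. i \<in> {1..m} \<Longrightarrow> z i \<in> pos_orthant"
    and p: "\<And>i j. i \<in> {1..m} \<Longrightarrow> j \<noteq> g0 \<Longrightarrow> thr g0 (Du i) (z i) j = p j"
    and total: "(\<Sum>l\<in>{1..m}. z l) = (\<Sum>l\<in>{1..m}. x0 l)"
    using holdings_converge by blast
  have "(\<lambda>t. thr g0 (Du i) (y t i) j) \<longlonglongrightarrow> p j" if "i \<in> {1..m}" "j \<noteq> g0" for i j
    using utility.tendsto_thr[OF agent_utility[OF that(1)] zX[OF that(1)] lim[OF that(1)], of g0 j] p[OF that]
    by simp
  moreover have "u i x \<le> u i (z i)"
    if "i \<in> {1..m}" "x \<in> pos_orthant" "budget g0 p x = budget g0 p (z i)" for i x
    using utility.le_budget[OF agent_utility[OF that(1)] zX[OF that(1)] that(2) p[OF that(1)]] that(3) by simp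
  ultimately show ?thesis
    using lim zX p total unfolding equilibrium_def budget_def by (intro exI[of _ z] exI[of _ p]) auto
qed

end

theorem theorem3:
  fixes u :: "nat \<Rightarrow> real ^ 'g::finite \<Rightarrow> real"
    and Du :: "nat \<Rightarrow> real ^ 'g \<Rightarrow> real ^ 'g"
    and H :: "nat \<Rightarrow> real ^ 'g \<Rightarrow> real ^ 'g ^ 'g"
    and g0 :: 'g and m :: nat
    and x0 :: "nat \<Rightarrow> real ^ 'g"
  assumes util: "\<forall>i\<in>{1..m}. utility_assms pos_orthant (u i) (Du i) (H i)"
    and init: "\<forall>i\<in>{1..m}. x0 i \<in> pos_orthant"
  shows
    "(\<forall>\<delta>. (\<forall>i\<in>{1..m}. \<forall>j. j \<noteq> g0 \<longrightarrow> 0 < \<delta> i j) \<longrightarrow>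
        \<not> (\<exists>s. s 0 = x0 \<and> (\<forall>k. trade_step pos_orthant u Du g0 m \<delta> (s k) (s (Suc k))))) \<and>
     (\<forall>\<delta> y stage.
        (\<forall>k. \<forall>i\<in>{1..m}. \<forall>j. j \<noteq> g0 \<longrightarrow> 0 < \<delta> k i j) \<and>
        (\<forall>k. \<forall>i\<in>{1..m}. \<forall>j. j \<noteq> g0 \<longrightarrow> \<delta> (Suc k) i j \<le> \<delta> k i j) \<and>
        (\<forall>i\<in>{1..m}. \<forall>j. j \<noteq> g0 \<longrightarrow> (\<lambda>k. \<delta> k i j) \<longlonglongrightarrow> 0) \<and>
        y 0 = x0 \<and> stage 0 = (0::nat) \<and>
        (\<forall>t. (trade_step pos_orthant u Du g0 m (\<delta> (stage t)) (y t) (y (Suc t))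
                \<and> stage (Suc t) = stage t)
           \<or> (\<not> trade_available pos_orthant u Du g0 m (\<delta> (stage t)) (y t)
                \<and> y (Suc t) = y t \<and> stage (Suc t) = Suc (stage t)))
      \<longrightarrow> (\<exists>xbar pbar.
             (\<forall>i\<in>{1..m}. (\<lambda>t. y t i) \<longlonglongrightarrow> xbar i \<and>
                (\<forall>j. j \<noteq> g0 \<longrightarrow>
                   (\<lambda>t. thr g0 (Du i) (y t i) j) \<longlonglongrightarrow> pbar j \<and>
                   thr g0 (Du i) (xbar i) j = pbar j)) \<and>
             equilibrium pos_orthant u g0 m x0 xbar pbar))"
proof (intro conjI allI impI)
  interpret economy u Du H g0 m
    by unfold_locales (use util in \<open>simp add: utility_def\<close>)
  fix \<delta> :: "nat \<Rightarrow> 'g \<Rightarrow> real"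
  assume "\<forall>i\<in>{1..m}. \<forall>j. j \<noteq> g0 \<longrightarrow> 0 < \<delta> i j"
  then show "\<not> (\<exists>s. s 0 = x0 \<and> (\<forall>k. trade_step pos_orthant u Du g0 m \<delta> (s k) (s (Suc k))))"
    using trade_sequence_terminates[of _ \<delta>] init by auto
next
  fix \<delta> :: "nat \<Rightarrow> nat \<Rightarrow> 'g \<Rightarrow> real" and y :: "nat \<Rightarrow> nat \<Rightarrow> real^'g" and stage :: "nat \<Rightarrow> nat"
  assume process: "(\<forall>k. \<forall>i\<in>{1..m}. \<forall>j. j \<noteq> g0 \<longrightarrow> 0 < \<delta> k i j) \<and>
        (\<forall>k. \<forall>i\<in>{1..m}. \<forall>j. j \<noteq> g0 \<longrightarrow> \<delta> (Suc k) i j \<le> \<delta> k i j) \<and>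
        (\<forall>i\<in>{1..m}. \<forall>j. j \<noteq> g0 \<longrightarrow> (\<lambda>k. \<delta> k i j) \<longlonglongrightarrow> 0) \<and>
        y 0 = x0 \<and> stage 0 = 0 \<and>
        (\<forall>t. (trade_step pos_orthant u Du g0 m (\<delta> (stage t)) (y t) (y (Suc t))
                \<and> stage (Suc t) = stage t)
           \<or> (\<not> trade_available pos_orthant u Du g0 m (\<delta> (stage t)) (y t)
                \<and> y (Suc t) = y t \<and> stage (Suc t) = Suc (stage t)))"
  interpret staged_trading u Du H g0 m x0 \<delta> y stage
    by unfold_locales (use util init process in \<open>simp_all add: utility_def\<close>)
  show "\<exists>xbar pbar.
          (\<forall>i\<in>{1..m}. (\<lambda>t. y t i) \<longlonglongrightarrow> xbar i \<and>
             (\<forall>j. j \<noteq> g0 \<longrightarrow> (\<lambda>t. thr g0 (Du i) (y t i) j) \<longlonglongrightarrow> pbar j \<and> thr g0 (Du i) (xbar i) j = pbar j)) \<and>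
          equilibrium pos_orthant u g0 m x0 xbar pbar"
    by (rule equilibrium_limit)
qed

end
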